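(* Let $K$ be an algebraically closed field of characteristic zero. For any integers $s\ge 1$ and $c\ge 2$ there is an Artinian complete intersection graded $K$-algebra $A_F=K[x_1,\dots,x_c]/\operatorname{Ann}(F)$ of codimension $c$ whose Macaulay dual generator $F\in K[X_1,\dots,X_c]$ is a sum of $s$ monomials. Moreover, this $A_F$ satisfies the strong Lefschetz property.
   Context: $K[X_1,\dots,X_c]$ is the divided power algebra, a module over $R=K[x_1,\dots,x_c]$ via contraction $x_i\circ X_j^k=\delta_{ij}X_j^{k-1}$ if $k>0$ and $0$ otherwise; for homogeneous $F$, $\operatorname{Ann}(F)=\{f\in R\mid f\circ F=0\}$, $A_F=R/\operatorname{Ann}(F)$, and $F$ is its Macaulay dual generator. A graded Artinian $K$-algebra $A$ has the strong Lefschetz property if there is a linear form $\ell\in A_1$ such that for all $i\ge 0$, $k\ge 1$ the map $\times\ell^k:A_i\to A_{i+k}$ has maximal rank. *)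

theory Defs
  imports "HOL-Library.Poly_Mapping" "HOL-Computational_Algebra.Polynomial"
begin

text \<open>The same carrier is used for
R = K[x_0..x_(c-1)] and (as a K-vector space) for the divided power algebra
K[X_0..X_(c-1)]; only the R-module structure (contraction) of the latter is needed.\<close>

type_synonym 'a mpoly = "(nat \<Rightarrow>\<^sub>0 nat) \<Rightarrow>\<^sub>0 'a"

definition tdeg :: "(nat \<Rightarrow>\<^sub>0 nat) \<Rightarrow> nat" where
  "tdeg \<alpha> = (\<Sum>i\<in>Poly_Mapping.keys \<alpha>. Poly_Mapping.lookup \<alpha> i)"

definition in_vars :: "nat \<Rightarrow> 'a::zero mpoly \<Rightarrow> bool" where
  "in_vars c p \<longleftrightarrow> (\<forall>\<alpha>\<in>Poly_Mapping.keys p. Poly_Mapping.keys \<alpha> \<subseteq> {..<c})"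

definition homog :: "nat \<Rightarrow> 'a::zero mpoly \<Rightarrow> bool" where
  "homog d p \<longleftrightarrow> (\<forall>\<alpha>\<in>Poly_Mapping.keys p. tdeg \<alpha> = d)"

definition mdvd :: "(nat \<Rightarrow>\<^sub>0 nat) \<Rightarrow> (nat \<Rightarrow>\<^sub>0 nat) \<Rightarrow> bool" where
  "mdvd \<beta> \<alpha> \<longleftrightarrow> (\<forall>i. Poly_Mapping.lookup \<beta> i \<le> Poly_Mapping.lookup \<alpha> i)"

definition contract :: "'a::comm_ring_1 mpoly \<Rightarrow> 'a mpoly \<Rightarrow> 'a mpoly" where
  "contract f F = (\<Sum>\<beta>\<in>Poly_Mapping.keys f. \<Sum>\<alpha>\<in>Poly_Mapping.keys F.
      if mdvd \<beta> \<alpha> then Poly_Mapping.single (\<alpha> - \<beta>) (Poly_Mapping.lookup f \<beta> * Poly_Mapping.lookup F \<alpha>) else 0)"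

definition Ann :: "nat \<Rightarrow> 'a::comm_ring_1 mpoly \<Rightarrow> 'a mpoly set" where
  "Ann c F = {f. in_vars c f \<and> contract f F = 0}"

definition Rdeg :: "nat \<Rightarrow> nat \<Rightarrow> 'a::zero mpoly set" where
  "Rdeg c i = {f. in_vars c f \<and> homog i f}"

definition artinian_AF :: "nat \<Rightarrow> 'a::comm_ring_1 mpoly \<Rightarrow> bool" where
  "artinian_AF c F \<longleftrightarrow> (\<exists>N. \<forall>n\<ge>N. Rdeg c n \<subseteq> Ann c F)"

text \<open>A_F has codimension c: no nonzero linear form of R lies in Ann(F), i.e. dim (A_F)_1 = c.\<close>
definition codim_AF :: "nat \<Rightarrow> 'a::comm_ring_1 mpoly \<Rightarrow> bool" where
  "codim_AF c F \<longleftrightarrow> (\<forall>l\<in>Rdeg c 1. l \<in> Ann c F \<longrightarrow> l = 0)"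

definition complete_intersection_AF :: "nat \<Rightarrow> 'a::comm_ring_1 mpoly \<Rightarrow> bool" where
  "complete_intersection_AF c F \<longleftrightarrow>
     (\<exists>g :: nat \<Rightarrow> 'a mpoly. (\<forall>j<c. in_vars c (g j)) \<and>
        Ann c F = {(\<Sum>j<c. h j * g j) | h. \<forall>j<c. in_vars c (h j)})"

definition strong_lefschetz_AF :: "nat \<Rightarrow> 'a::comm_ring_1 mpoly \<Rightarrow> bool" where
  "strong_lefschetz_AF c F \<longleftrightarrow>
     (\<exists>l\<in>Rdeg c 1. \<forall>i k. k \<ge> 1 \<longrightarrow>
        ((\<forall>g\<in>Rdeg c i. l ^ k * g \<in> Ann c F \<longrightarrow> g \<in> Ann c F) \<or>
         (\<forall>h\<in>Rdeg c (i + k). \<exists>g\<in>Rdeg c i. h - l ^ k * g \<in> Ann c F)))"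

end

theory Submission
  imports Defs
begin

text \<open>For a monomial \<open>F = X\<^sup>\<alpha>\<close> with all \<open>\<alpha>\<^sub>i \<ge> 1\<close>, \<open>Ann(F)\<close> is generated by the
  powers \<open>x\<^sub>i ^ (\<alpha>\<^sub>i + 1)\<close>, so \<open>A\<^sub>F\<close> is a monomial complete intersection of codimension
  \<open>c\<close>. Contraction by \<open>\<ell> = x\<^sub>0 + \<dots> + x\<^bsub>c-1\<^esub>\<close> acts on the inverse system \<open>R \<circ> F\<close> and
  extends to an action of sl2 in which the degree \<open>m\<close> part has weight \<open>|\<alpha>| - 2 m\<close>. The
  representation theory of sl2 makes the powers of this operator injective or surjective between the
  appropriate graded pieces, and \<open>g \<mapsto> g \<circ> F\<close> turns this into the strong Lefschetz property of
  \<open>A\<^sub>F\<close> for \<open>\<ell>\<close>.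

  To obtain \<open>s\<close> monomials, apply the divided power substitution \<open>X\<^sub>1 \<mapsto> X\<^sub>0 + X\<^sub>1\<close> to
  \<open>X\<^sub>0 X\<^sub>1 ^ (s - 1) X\<^sub>2 \<cdots> X\<^bsub>c-1\<^esub>\<close>: the result has exactly \<open>s\<close> terms, and since the
  substitution is adjoint to the graded automorphism \<open>x\<^sub>0 \<mapsto> x\<^sub>0 + x\<^sub>1\<close> of \<open>R\<close>, all
  properties of \<open>A\<^sub>F\<close> are preserved.\<close>

section \<open>Exponent vectors and polynomials\<close>

lemma tdeg_sum_superset:
  assumes "finite S" "Poly_Mapping.keys \<alpha> \<subseteq> S"
  shows "tdeg \<alpha> = (\<Sum>i\<in>S. Poly_Mapping.lookup \<alpha> i)"
  unfolding tdeg_def using assms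
  by (intro sum.mono_neutral_left) (auto simp: in_keys_iff)

lemma tdeg_add: "tdeg (\<alpha> + \<beta>) = tdeg \<alpha> + tdeg \<beta>"
proof -
  let ?S = "Poly_Mapping.keys \<alpha> \<union> Poly_Mapping.keys \<beta>"
  have "tdeg (\<alpha> + \<beta>) = (\<Sum>i\<in>?S. Poly_Mapping.lookup (\<alpha> + \<beta>) i)"
    by (rule tdeg_sum_superset) (use keys_add[of \<alpha> \<beta>] in auto)
  also have "\<dots> = (\<Sum>i\<in>?S. Poly_Mapping.lookup \<alpha> i) + (\<Sum>i\<in>?S. Poly_Mapping.lookup \<beta> i)"
    by (simp add: lookup_add sum.distrib)
  also have "\<dots> = tdeg \<alpha> + tdeg \<beta>"
    using tdeg_sum_superset[of ?S \<alpha>] tdeg_sum_superset[of ?S \<beta>] by simp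
  finally show ?thesis .
qed

lemma tdeg_single [simp]: "tdeg (Poly_Mapping.single i n) = n"
  by (simp add: tdeg_def)

lemma tdeg_zero [simp]: "tdeg 0 = 0"
  by (simp add: tdeg_def)

lemma lookup_le_tdeg: "Poly_Mapping.lookup \<alpha> i \<le> tdeg \<alpha>"
proof (cases "i \<in> Poly_Mapping.keys \<alpha>")
  case True
  then show ?thesis unfolding tdeg_def by (intro member_le_sum) auto
qed (simp add: in_keys_iff)

lemma tdeg_eq_0_iff: "tdeg \<alpha> = 0 \<longleftrightarrow> \<alpha> = 0"
proof
  assume "tdeg \<alpha> = 0"
  then have "Poly_Mapping.lookup \<alpha> i = 0" for i
    using lookup_le_tdeg[of \<alpha> i] by simp
  then show "\<alpha> = 0" by (intro poly_mapping_eqI) simp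
qed simp

lemma mdvd_refl_add: "mdvd \<beta> (\<beta> + \<gamma>)"
  by (simp add: mdvd_def lookup_add)

lemma mdvd_diff: "mdvd (\<alpha> - \<gamma>) \<alpha>"
  by (simp add: mdvd_def lookup_minus)

lemma mdvd_trans: "mdvd \<alpha> \<beta> \<Longrightarrow> mdvd \<beta> \<gamma> \<Longrightarrow> mdvd \<alpha> \<gamma>"
  unfolding mdvd_def using le_trans by blast

lemma mdvd_add_diff: "mdvd \<beta> \<alpha> \<Longrightarrow> \<beta> + (\<alpha> - \<beta>) = \<alpha>"
  by (intro poly_mapping_eqI) (simp add: mdvd_def lookup_add lookup_minus)

lemma mdvd_diff_diff: "mdvd \<gamma> \<alpha> \<Longrightarrow> \<alpha> - (\<alpha> - \<gamma>) = \<gamma>"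
  by (intro poly_mapping_eqI) (simp add: mdvd_def lookup_minus)

lemma add_eq_iff_mdvd: "\<beta> + \<gamma> = \<alpha> \<longleftrightarrow> mdvd \<gamma> \<alpha> \<and> \<beta> = \<alpha> - \<gamma>"
  by (metis add.commute add_diff_cancel_right' mdvd_add_diff mdvd_refl_add)

lemma tdeg_mdvd: "mdvd \<beta> \<alpha> \<Longrightarrow> tdeg \<alpha> = tdeg \<beta> + tdeg (\<alpha> - \<beta>)"
  by (metis mdvd_add_diff tdeg_add)

lemma tdeg_mono: "mdvd \<beta> \<alpha> \<Longrightarrow> tdeg \<beta> \<le> tdeg \<alpha>"
  using tdeg_mdvd by fastforce

lemma keys_diff_subset: "Poly_Mapping.keys ((\<gamma>::nat \<Rightarrow>\<^sub>0 nat) - \<delta>) \<subseteq> Poly_Mapping.keys \<gamma>"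
  by (auto simp: in_keys_iff lookup_minus)

definition unit_vec :: "nat \<Rightarrow> (nat \<Rightarrow>\<^sub>0 nat)" where
  "unit_vec i = Poly_Mapping.single i 1"

lemma lookup_unit_vec: "Poly_Mapping.lookup (unit_vec i) j = (if i = j then 1 else 0)"
  by (simp add: unit_vec_def lookup_single when_def)

lemma tdeg_unit_vec [simp]: "tdeg (unit_vec i) = 1"
  by (simp add: unit_vec_def)

lemma mdvd_unit_vec: "mdvd (unit_vec i) \<gamma> \<longleftrightarrow> 1 \<le> Poly_Mapping.lookup \<gamma> i"
  by (auto simp: mdvd_def lookup_unit_vec)

definition C :: "'a::comm_ring_1 \<Rightarrow> 'a mpoly" where
  "C a = Poly_Mapping.single 0 a"

definition X :: "nat \<Rightarrow> 'a::comm_ring_1 mpoly" where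
  "X i = Poly_Mapping.single (unit_vec i) 1"

lemma lookup_C_mult [simp]: "Poly_Mapping.lookup (C a * p) \<beta> = a * Poly_Mapping.lookup p \<beta>"
  by (simp add: C_def mult_map_scale_conv_mult[symmetric] map.rep_eq when_def)

lemma C_mult_C [simp]: "C a * C b = C (a * b)"
  by (simp add: C_def mult_single)

lemma C_1 [simp]: "C 1 = 1" and C_0 [simp]: "C 0 = 0"
  by (simp_all add: C_def)

lemma C_add: "C (a + b) = C a + C b"
  by (simp add: C_def single_add)

lemma keys_C_mult_subset: "Poly_Mapping.keys (C a * p) \<subseteq> Poly_Mapping.keys p"
  by (auto simp: in_keys_iff)

lemma module_C_mult: "module (\<lambda>a (p :: 'a::comm_ring_1 mpoly). C a * p)"
  by unfold_locales (simp_all add: distrib_left C_add distrib_right flip: mult.assoc)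

lemma vector_space_C_mult: "vector_space (\<lambda>a (p :: 'a::field mpoly). C a * p)"
  by (rule module_iff_vector_space[THEN iffD1, OF module_C_mult])

lemma poly_mapping_sum_singles:
  "(\<Sum>\<gamma>\<in>Poly_Mapping.keys p. Poly_Mapping.single \<gamma> (Poly_Mapping.lookup p \<gamma>)) = p"
  by (rule poly_mapping_eqI)
     (auto simp: lookup_sum lookup_single when_def in_keys_iff sum.delta' split: if_splits)

lemma mult_expand:
  "p * q = (\<Sum>\<gamma>\<in>Poly_Mapping.keys p. \<Sum>\<gamma>'\<in>Poly_Mapping.keys q.
              Poly_Mapping.single (\<gamma> + \<gamma>') (Poly_Mapping.lookup p \<gamma> * Poly_Mapping.lookup q \<gamma>'))"
  by (subst poly_mapping_sum_singles[symmetric, of p], subst poly_mapping_sum_singles[symmetric, of q])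
     (simp add: sum_distrib_left sum_distrib_right mult_single sum.swap[where B = "Poly_Mapping.keys q"])

lemma lookup_single_mult:
  "Poly_Mapping.lookup (Poly_Mapping.single \<delta> a * p) \<gamma> =
     (if mdvd \<delta> \<gamma> then a * Poly_Mapping.lookup p (\<gamma> - \<delta>) else (0::'a::comm_ring_1))"
proof -
  have "Poly_Mapping.single \<delta> a * p =
      (\<Sum>\<beta>\<in>Poly_Mapping.keys p. Poly_Mapping.single (\<delta> + \<beta>) (a * Poly_Mapping.lookup p \<beta>))"
    by (subst poly_mapping_sum_singles[symmetric, of p]) (simp add: sum_distrib_left mult_single)
  then have "Poly_Mapping.lookup (Poly_Mapping.single \<delta> a * p) \<gamma> =
      (\<Sum>\<beta>\<in>Poly_Mapping.keys p. if \<beta> = \<gamma> - \<delta> \<and> mdvd \<delta> \<gamma> then a * Poly_Mapping.lookup p \<beta> else 0)"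
    using add_eq_iff_mdvd[of _ \<delta> \<gamma>]
    by (simp add: lookup_sum lookup_single when_def add.commute[of \<delta>] conj_commute)
  also have "\<dots> = (if mdvd \<delta> \<gamma> then a * Poly_Mapping.lookup p (\<gamma> - \<delta>) else 0)"
    by (auto simp: in_keys_iff)
  finally show ?thesis .
qed

lemma lookup_X_mult:
  "Poly_Mapping.lookup (X i * p) \<gamma> =
    (if 1 \<le> Poly_Mapping.lookup \<gamma> i then Poly_Mapping.lookup p (\<gamma> - unit_vec i) else 0)"
  by (simp add: X_def lookup_single_mult mdvd_unit_vec)

lemma mpoly_induct [case_names add mult const var]:
  fixes P :: "'a::comm_ring_1 mpoly \<Rightarrow> bool"
  assumes add: "\<And>p q. P p \<Longrightarrow> P q \<Longrightarrow> P (p + q)"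
    and mult: "\<And>p q. P p \<Longrightarrow> P q \<Longrightarrow> P (p * q)"
    and const: "\<And>a. P (C a)"
    and var: "\<And>i. P (X i)"
  shows "P p"
proof -
  have monomial: "P (Poly_Mapping.single \<gamma> 1)" for \<gamma>
  proof (induction "tdeg \<gamma>" arbitrary: \<gamma>)
    case 0
    then show ?case using const[of 1] by (simp add: tdeg_eq_0_iff C_def)
  next
    case (Suc n)
    then obtain i where "i \<in> Poly_Mapping.keys \<gamma>"
      by (metis tdeg_eq_0_iff keys_eq_empty all_not_in_conv nat.distinct(1))
    then have d: "mdvd (unit_vec i) \<gamma>" by (simp add: mdvd_unit_vec in_keys_iff)
    have "P (Poly_Mapping.single (\<gamma> - unit_vec i) 1)"
      using Suc tdeg_mdvd[OF d] by simp
    moreover have "Poly_Mapping.single \<gamma> 1 = Poly_Mapping.single (\<gamma> - unit_vec i) 1 * X i"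
      using mdvd_add_diff[OF d] by (simp add: X_def mult_single add.commute)
    ultimately show ?case using mult var by metis
  qed
  have "P (\<Sum>\<gamma>\<in>S. C (f \<gamma>) * Poly_Mapping.single \<gamma> 1)" for S f
    by (induction S rule: infinite_finite_induct) (use const[of 0] add mult const monomial in auto)
  moreover have "p = (\<Sum>\<gamma>\<in>Poly_Mapping.keys p. C (Poly_Mapping.lookup p \<gamma>) * Poly_Mapping.single \<gamma> 1)"
    by (simp add: C_def mult_single poly_mapping_sum_singles)
  ultimately show ?thesis by metis
qed

section \<open>Contraction\<close>

lemma lookup_contract:
  "Poly_Mapping.lookup (contract g G) \<beta> =
     (\<Sum>\<gamma>\<in>Poly_Mapping.keys g. Poly_Mapping.lookup g \<gamma> * Poly_Mapping.lookup G (\<beta> + \<gamma>))"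
proof -
  have "Poly_Mapping.lookup (if mdvd \<gamma> \<alpha>
          then Poly_Mapping.single (\<alpha> - \<gamma>) (Poly_Mapping.lookup g \<gamma> * Poly_Mapping.lookup G \<alpha>) else 0) \<beta>
        = (if \<alpha> = \<beta> + \<gamma> then Poly_Mapping.lookup g \<gamma> * Poly_Mapping.lookup G \<alpha> else 0)" for \<gamma> \<alpha>
    using add_eq_iff_mdvd[of \<beta> \<gamma> \<alpha>] by (auto simp: lookup_single when_def)
  then show ?thesis
    by (auto simp: contract_def lookup_sum sum.delta' in_keys_iff intro!: sum.cong)
qed

lemma lookup_contract_superset:
  assumes "finite S" "Poly_Mapping.keys g \<subseteq> S"
  shows "Poly_Mapping.lookup (contract g G) \<beta> =
     (\<Sum>\<gamma>\<in>S. Poly_Mapping.lookup g \<gamma> * Poly_Mapping.lookup G (\<beta> + \<gamma>))"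
  unfolding lookup_contract using assms
  by (intro sum.mono_neutral_left) (auto simp: in_keys_iff)

lemma lookup_contract_single:
  "Poly_Mapping.lookup (contract (Poly_Mapping.single \<gamma> a) G) \<beta> = a * Poly_Mapping.lookup G (\<beta> + \<gamma>)"
  by (cases "a = 0") (simp_all add: lookup_contract)

lemma lookup_contract_X:
  "Poly_Mapping.lookup (contract (X i) G) \<beta> = Poly_Mapping.lookup G (\<beta> + unit_vec i)"
  by (simp add: X_def lookup_contract_single)

lemma contract_add_left: "contract (g + h) G = contract g G + contract h G"
proof (rule poly_mapping_eqI)
  fix \<beta>
  let ?S = "Poly_Mapping.keys g \<union> Poly_Mapping.keys h"
  show "Poly_Mapping.lookup (contract (g + h) G) \<beta> = Poly_Mapping.lookup (contract g G + contract h G) \<beta>"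
    by (simp add: lookup_add lookup_contract_superset[OF _ keys_add] lookup_contract_superset[of ?S]
        distrib_right sum.distrib)
qed

lemma contract_add_right: "contract g (G + H) = contract g G + contract g H"
  by (rule poly_mapping_eqI) (simp add: lookup_add lookup_contract distrib_left sum.distrib)

lemma contract_C_mult_left: "contract (C a * g) G = C a * contract g G"
proof (rule poly_mapping_eqI)
  fix \<beta>
  show "Poly_Mapping.lookup (contract (C a * g) G) \<beta> = Poly_Mapping.lookup (C a * contract g G) \<beta>"
    unfolding lookup_contract_superset[OF finite_keys keys_C_mult_subset]
    by (simp add: lookup_contract sum_distrib_left mult.assoc)
qed

lemma contract_C_mult_right: "contract g (C a * G) = C a * contract g G"
  by (rule poly_mapping_eqI) (simp add: lookup_contract sum_distrib_left mult.left_commute)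

lemma contract_one [simp]: "contract 1 G = G"
  by (rule poly_mapping_eqI) (simp add: lookup_contract)

lemma contract_C: "contract (C a) G = C a * G"
  using contract_C_mult_left[of a 1 G] by simp

lemma contract_zero_left [simp]: "contract 0 G = 0"
  by (simp add: contract_def)

lemma contract_zero_right [simp]: "contract g 0 = 0"
  by (simp add: contract_def)

lemma contract_sum_left: "contract (\<Sum>i\<in>I. g i) G = (\<Sum>i\<in>I. contract (g i) G)"
  by (induction I rule: infinite_finite_induct) (auto simp: contract_add_left)

lemma contract_diff_left: "contract (g - h) G = contract g G - contract h G"
  using contract_add_left[of "g - h" h G] by (simp add: algebra_simps)

lemma contract_mult: "contract (p * q) G = contract p (contract q G)"
proof (rule poly_mapping_eqI)
  fix \<beta>
  have "Poly_Mapping.lookup (contract (p * q) G) \<beta> =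
     (\<Sum>\<gamma>\<in>Poly_Mapping.keys p. \<Sum>\<gamma>'\<in>Poly_Mapping.keys q.
        Poly_Mapping.lookup p \<gamma> * Poly_Mapping.lookup q \<gamma>' * Poly_Mapping.lookup G (\<beta> + (\<gamma> + \<gamma>')))"
    by (subst mult_expand) (simp add: contract_sum_left lookup_sum lookup_contract_single)
  also have "\<dots> = Poly_Mapping.lookup (contract p (contract q G)) \<beta>"
    by (simp add: lookup_contract sum_distrib_left mult_ac add_ac)
  finally show "Poly_Mapping.lookup (contract (p * q) G) \<beta> = Poly_Mapping.lookup (contract p (contract q G)) \<beta>" .
qed

lemma contract_power: "contract (l ^ k) G = (contract l ^^ k) G"
  by (induction k) (simp_all add: contract_mult)

lemma lookup_contract_monomial:
  "Poly_Mapping.lookup (contract g (Poly_Mapping.single \<alpha> (1::'a::comm_ring_1))) \<beta> =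
     (if mdvd \<beta> \<alpha> then Poly_Mapping.lookup g (\<alpha> - \<beta>) else 0)"
proof -
  have "Poly_Mapping.lookup (contract g (Poly_Mapping.single \<alpha> (1::'a))) \<beta> =
    (\<Sum>\<gamma>\<in>Poly_Mapping.keys g. if \<gamma> = \<alpha> - \<beta> \<and> mdvd \<beta> \<alpha> then Poly_Mapping.lookup g \<gamma> else 0)"
    unfolding lookup_contract
    by (intro sum.cong refl)
       (use add_eq_iff_mdvd[of _ \<beta> \<alpha>] add.commute mdvd_add_diff[of \<beta> \<alpha>] in \<open>auto simp: lookup_single when_def\<close>)
  also have "\<dots> = (if mdvd \<beta> \<alpha> then Poly_Mapping.lookup g (\<alpha> - \<beta>) else 0)"
    by (auto simp: in_keys_iff)
  finally show ?thesis .
qed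

lemma contract_single_monomial:
  "contract (Poly_Mapping.single \<gamma> b) (Poly_Mapping.single \<alpha> 1) =
     (if mdvd \<gamma> \<alpha> then Poly_Mapping.single (\<alpha> - \<gamma>) b else 0)"
proof (rule poly_mapping_eqI)
  fix \<beta>
  show "Poly_Mapping.lookup (contract (Poly_Mapping.single \<gamma> b) (Poly_Mapping.single \<alpha> 1)) \<beta> =
        Poly_Mapping.lookup (if mdvd \<gamma> \<alpha> then Poly_Mapping.single (\<alpha> - \<gamma>) b else 0) \<beta>"
    using add_eq_iff_mdvd[of \<beta> \<gamma> \<alpha>] by (auto simp: lookup_contract_single lookup_single when_def)
qed

lemma in_vars_zero [simp]: "in_vars c 0"
  by (simp add: in_vars_def)

lemma in_vars_one [simp]: "in_vars c 1"
  by (simp add: in_vars_def)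

lemma in_vars_single: "Poly_Mapping.keys \<gamma> \<subseteq> {..<c} \<Longrightarrow> in_vars c (Poly_Mapping.single \<gamma> a)"
  by (simp add: in_vars_def)

lemma in_vars_X: "i < c \<Longrightarrow> in_vars c (X i)"
  by (simp add: in_vars_def X_def unit_vec_def)

lemma in_vars_C: "in_vars c (C a)"
  by (simp add: in_vars_def C_def)

lemma in_vars_add: "in_vars c p \<Longrightarrow> in_vars c q \<Longrightarrow> in_vars c (p + q)"
  unfolding in_vars_def using keys_add[of p q] by blast

lemma in_vars_diff: "in_vars c p \<Longrightarrow> in_vars c q \<Longrightarrow> in_vars c (p - (q::'a::ab_group_add mpoly))"
  unfolding in_vars_def using keys_diff[of p q] by blast

lemma keys_add_exp:
  "Poly_Mapping.keys ((\<alpha>::nat \<Rightarrow>\<^sub>0 nat) + \<beta>) = Poly_Mapping.keys \<alpha> \<union> Poly_Mapping.keys \<beta>"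
  by (auto simp: in_keys_iff lookup_add)

lemma in_vars_mult: "in_vars c p \<Longrightarrow> in_vars c q \<Longrightarrow> in_vars c (p * q)"
  unfolding in_vars_def using keys_mult[of p q] by (force simp: keys_add_exp)

lemma in_vars_sum: "(\<And>i. i \<in> I \<Longrightarrow> in_vars c (p i)) \<Longrightarrow> in_vars c (\<Sum>i\<in>I. p i)"
  by (induction I rule: infinite_finite_induct) (auto intro: in_vars_add)

lemma in_vars_power: "in_vars c p \<Longrightarrow> in_vars c (p ^ n)"
  by (induction n) (simp_all add: in_vars_mult)

lemma homog_zero [simp]: "homog d 0"
  by (simp add: homog_def)

lemma homog_single: "homog (tdeg \<gamma>) (Poly_Mapping.single \<gamma> a)"
  by (simp add: homog_def)

lemma homog_X: "homog 1 (X i)"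
  by (simp add: homog_def X_def)

lemma homog_add: "homog d p \<Longrightarrow> homog d q \<Longrightarrow> homog d (p + q)"
  unfolding homog_def using keys_add[of p q] by blast

lemma homog_C_mult: "homog d p \<Longrightarrow> homog d (C a * p)"
  unfolding homog_def using keys_C_mult_subset by blast

lemma homog_mult: "homog d p \<Longrightarrow> homog d' q \<Longrightarrow> homog (d + d') (p * q)"
  unfolding homog_def using keys_mult[of p q] by (force simp: tdeg_add)

lemma homog_sum: "(\<And>i. i \<in> I \<Longrightarrow> homog d (p i)) \<Longrightarrow> homog d (\<Sum>i\<in>I. p i)"
  by (induction I rule: infinite_finite_induct) (auto intro: homog_add)

lemma homog_power: "homog d p \<Longrightarrow> homog (n * d) (p ^ n)"
proof (induction n)
  case (Suc n)
  then show ?case using homog_mult[of d p "n * d" "p ^ n"] by (simp add: add.commute)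
qed (simp add: homog_def)

section \<open>Graded representations of sl2\<close>

text \<open>\<open>V m\<close> is the weight space of weight \<open>N - 2 m\<close> of \<open>h = [e, f]\<close>.\<close>

locale graded_sl2 = vector_space scale + e: Vector_Spaces.linear scale scale e + f: Vector_Spaces.linear scale scale f
  for scale :: "'k::field_char_0 \<Rightarrow> 'v::ab_group_add \<Rightarrow> 'v" (infixr \<open>*s\<close> 75)
    and e f :: "'v \<Rightarrow> 'v" +
  fixes V :: "nat \<Rightarrow> 'v set" and N :: int and d :: nat
  assumes subspace_V: "subspace (V m)"
    and e_V: "x \<in> V m \<Longrightarrow> e x \<in> V (m - 1)"
    and e_V0: "x \<in> V 0 \<Longrightarrow> e x = 0"
    and f_V: "x \<in> V m \<Longrightarrow> f x \<in> V (Suc m)"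
    and V_above: "d < m \<Longrightarrow> x \<in> V m \<Longrightarrow> x = 0"
    and e_f_commute: "x \<in> V m \<Longrightarrow> e (f x) = f (e x) + of_int (N - 2 * int m) *s x"
begin

lemma e_pow_add: "(e ^^ k) (x + y) = (e ^^ k) x + (e ^^ k) y"
  by (induction k) (simp_all add: e.add)

lemma e_pow_scale: "(e ^^ k) (a *s x) = a *s (e ^^ k) x"
  by (induction k) (simp_all add: e.scale)

lemma e_pow_zero [simp]: "(e ^^ k) 0 = 0"
  by (induction k) simp_all

lemma e_pow_V: "x \<in> V m \<Longrightarrow> (e ^^ k) x \<in> V (m - k)"
proof (induction k)
  case (Suc k)
  then show ?case using e_V[of "(e ^^ k) x" "m - k"] by simp
qed simp

lemma f_pow_V: "x \<in> V m \<Longrightarrow> (f ^^ k) x \<in> V (m + k)"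
  by (induction k) (simp_all add: f_V)

lemma e_pow_vanish: "x \<in> V m \<Longrightarrow> m < k \<Longrightarrow> (e ^^ k) x = 0"
proof -
  assume x: "x \<in> V m" and "m < k"
  define r where "r = k - Suc m"
  have k: "k = r + Suc m" unfolding r_def using \<open>m < k\<close> by simp
  have "(e ^^ Suc m) x = 0" using e_pow_V[OF x, of m] by (simp add: e_V0)
  then show ?thesis unfolding k funpow_add by simp
qed

lemma scale_of_int_add: "p + q = r \<Longrightarrow> of_int p *s x + of_int q *s x = of_int r *s x"
  by (simp flip: scale_left_distrib of_int_add)

lemma e_pow_Suc_f:
  assumes x: "x \<in> V m"
  shows "(e ^^ Suc j) (f x) =
    f ((e ^^ Suc j) x) + of_int ((int j + 1) * (N - 2 * int m + int j)) *s (e ^^ j) x"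
proof (induction j)
  case 0
  then show ?case using e_f_commute[OF x] by simp
next
  case (Suc j)
  define y where "y = (e ^^ Suc j) x"
  have y: "y \<in> V (m - Suc j)" unfolding y_def by (rule e_pow_V[OF x])
  have efy: "e (f y) = f (e y) + of_int (N - 2 * int m + 2 * int j + 2) *s y"
  proof (cases "Suc j \<le> m")
    case True
    then show ?thesis using e_f_commute[OF y] by (simp add: of_nat_diff algebra_simps)
  next
    case False
    then show ?thesis using e_pow_vanish[OF x, of "Suc j"] by (simp add: y_def)
  qed
  have "(e ^^ Suc (Suc j)) (f x) = e ((e ^^ Suc j) (f x))"
    by (simp only: funpow.simps comp_apply)
  also have "\<dots> = e (f y) + of_int ((int j + 1) * (N - 2 * int m + int j)) *s y"
    unfolding Suc e.add e.scale y_def by simp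
  also have "\<dots> = f (e y) + (of_int (N - 2 * int m + 2 * int j + 2) *s y
      + of_int ((int j + 1) * (N - 2 * int m + int j)) *s y)"
    by (simp only: efy add.assoc)
  also have "\<dots> = f (e y) + of_int ((int (Suc j) + 1) * (N - 2 * int m + int (Suc j))) *s y"
    by (subst scale_of_int_add[where r = "(int (Suc j) + 1) * (N - 2 * int m + int (Suc j))"])
       (simp_all add: algebra_simps)
  finally show ?case by (simp add: y_def)
qed

text \<open>Downward induction on \<open>m\<close>: if \<open>e\<^sup>k\<^sup>+\<^sup>1\<close> kills \<open>x\<close>, then \<open>e\<^sup>k\<^sup>+\<^sup>2\<close> kills \<open>f x\<close>
  one degree higher, so \<open>f x = 0\<close>, and the commutation relation leaves a nonzero multiple of
  \<open>e\<^sup>k x\<close>.\<close>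

lemma e_pow_kernel_step:
  assumes above: "\<And>k x. x \<in> V (Suc m) \<Longrightarrow> N - 2 * int (Suc m) + int k \<le> 0 \<Longrightarrow> (e ^^ k) x = 0 \<Longrightarrow> x = 0"
  shows "x \<in> V m \<Longrightarrow> N - 2 * int m + int k \<le> 0 \<Longrightarrow> (e ^^ k) x = 0 \<Longrightarrow> x = 0"
proof (induction k arbitrary: x)
  case (Suc k)
  have fx: "f x \<in> V (Suc m)" using f_V[OF Suc.prems(1)] .
  have "(e ^^ Suc (Suc k)) (f x) = 0"
    using e_pow_Suc_f[OF Suc.prems(1), of "Suc k"] Suc.prems(3) by simp
  then have "f x = 0" using above[OF fx, of "Suc (Suc k)"] Suc.prems(2) by simp
  then have "of_int ((int k + 1) * (N - 2 * int m + int k)) *s (e ^^ k) x = 0"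
    using e_pow_Suc_f[OF Suc.prems(1), of k] Suc.prems(3) by simp
  moreover have "(int k + 1) * (N - 2 * int m + int k) \<noteq> 0" using Suc.prems(2) by simp
  ultimately have "(e ^^ k) x = 0" by (simp del: of_int_mult)
  then show ?case using Suc by simp
qed simp

lemma e_pow_eq_0_imp_eq_0:
  assumes "x \<in> V m" "N - 2 * int m + int k \<le> 0" "(e ^^ k) x = 0"
  shows "x = 0"
proof -
  have "\<forall>k x. x \<in> V n \<longrightarrow> N - 2 * int n + int k \<le> 0 \<longrightarrow> (e ^^ k) x = 0 \<longrightarrow> x = 0" for n
  proof (induction "Suc d - n" arbitrary: n)
    case 0
    then have "d < n" by simp
    then show ?case using V_above by blast
  next
    case (Suc t)
    then have "t = Suc d - Suc n" by simp
    from Suc.hyps(1)[OF this] show ?case using e_pow_kernel_step by blast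
  qed
  then show ?thesis using assms by blast
qed

lemma e_f_pow_lowest:
  assumes w: "w \<in> V m" and ew: "e w = 0"
  shows "e ((f ^^ Suc j) w) = of_int ((int j + 1) * (N - 2 * int m - int j)) *s (f ^^ j) w"
proof (induction j)
  case 0
  then show ?case using e_f_commute[OF w] ew by simp
next
  case (Suc j)
  have "e ((f ^^ Suc (Suc j)) w) = e (f ((f ^^ Suc j) w))"
    by simp
  also have "\<dots> = f (e ((f ^^ Suc j) w)) + of_int (N - 2 * int (m + Suc j)) *s (f ^^ Suc j) w"
    by (rule e_f_commute[OF f_pow_V[OF w]])
  also have "\<dots> = of_int ((int j + 1) * (N - 2 * int m - int j)) *s (f ^^ Suc j) w
      + of_int (N - 2 * int (m + Suc j)) *s (f ^^ Suc j) w"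
    by (subst Suc) (simp only: f.scale funpow.simps(2) o_apply)
  also have "\<dots> = of_int ((int (Suc j) + 1) * (N - 2 * int m - int (Suc j))) *s (f ^^ Suc j) w"
    by (rule scale_of_int_add) (simp add: algebra_simps)
  finally show ?case .
qed

lemma e_pow_f_pow_lowest:
  assumes w: "w \<in> V m" and ew: "e w = 0"
  shows "(e ^^ k) ((f ^^ k) w) = of_int (\<Prod>j<k. (int j + 1) * (N - 2 * int m - int j)) *s w"
proof (induction k)
  case (Suc k)
  have "(e ^^ Suc k) ((f ^^ Suc k) w) = (e ^^ k) (e ((f ^^ Suc k) w))"
    by (simp add: funpow_Suc_right del: funpow.simps)
  also have "\<dots> = of_int ((int k + 1) * (N - 2 * int m - int k)) *s (e ^^ k) ((f ^^ k) w)"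
    by (simp only: e_f_pow_lowest[OF w ew] e_pow_scale)
  also have "\<dots> = of_int (\<Prod>j<Suc k. (int j + 1) * (N - 2 * int m - int j)) *s w"
    by (simp add: Suc mult_ac)
  finally show ?case .
qed simp

lemma e_pow_surj_lowest:
  assumes w: "w \<in> V m" and ew: "e w = 0" and k: "int k \<le> N - 2 * int m"
  shows "\<exists>v\<in>V (m + k). (e ^^ k) v = w"
proof -
  define P where "P = (\<Prod>j<k. (int j + 1) * (N - 2 * int m - int j))"
  have "P \<noteq> 0" unfolding P_def using k by (auto simp: prod_zero_iff)
  then have "(of_int P :: 'k) \<noteq> 0" by simp
  moreover have "(e ^^ k) ((f ^^ k) w) = of_int P *s w"
    unfolding P_def by (rule e_pow_f_pow_lowest[OF w ew])
  ultimately have "(e ^^ k) (inverse (of_int P) *s (f ^^ k) w) = w"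
    by (simp add: e_pow_scale)
  moreover have "inverse (of_int P) *s (f ^^ k) w \<in> V (m + k)"
    using subspace_V f_pow_V[OF w] by (simp add: subspace_scale)
  ultimately show ?thesis by blast
qed

lemma e_pow_surj:
  "w \<in> V m \<Longrightarrow> int k \<le> N - 2 * int m \<Longrightarrow> \<exists>v\<in>V (m + k). (e ^^ k) v = w"
proof (induction m arbitrary: k w)
  case 0
  then show ?case using e_pow_surj_lowest e_V0 by blast
next
  case (Suc m)
  note w = Suc.prems(1)
  obtain u where u: "u \<in> V (m + Suc k)" and eu: "(e ^^ Suc k) u = e w"
    using Suc.IH[of "e w" "Suc k"] e_V[OF w] Suc.prems(2) by auto
  define w' where "w' = w - (e ^^ k) u"
  have w': "w' \<in> V (Suc m)"
    unfolding w'_def using subspace_V w e_pow_V[OF u, of k] by (simp add: subspace_diff)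
  have "e w' = 0" using eu by (simp add: w'_def e.diff)
  then obtain v where v: "v \<in> V (Suc m + k)" and ev: "(e ^^ k) v = w'"
    using e_pow_surj_lowest[OF w'] Suc.prems(2) by blast
  have "(e ^^ k) (u + v) = w" by (simp add: e_pow_add ev w'_def)
  moreover have "u + v \<in> V (Suc m + k)" using subspace_V u v by (simp add: subspace_add)
  ultimately show ?case by blast
qed

end

section \<open>The sl2-action on the inverse system of a monomial\<close>

definition sum_vars :: "nat \<Rightarrow> 'a::comm_ring_1 mpoly" where
  "sum_vars c = (\<Sum>i<c. X i)"

definition inv_system :: "(nat \<Rightarrow>\<^sub>0 nat) \<Rightarrow> nat \<Rightarrow> 'a::zero mpoly set" where
  "inv_system \<alpha> m = {H. \<forall>\<beta>\<in>Poly_Mapping.keys H. mdvd \<beta> \<alpha> \<and> tdeg \<beta> = m}"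

text \<open>On the span of \<open>X\<^sub>i\<^sup>k\<close>, \<open>k \<le> \<alpha>\<^sub>i\<close>, contraction by \<open>x\<^sub>i\<close> and
  \<open>X\<^sub>i\<^sup>k \<mapsto> (k + 1) (\<alpha>\<^sub>i - k) X\<^sub>i\<^sup>k\<^sup>+\<^sup>1\<close> form an sl2-triple with
  \<open>h X\<^sub>i\<^sup>k = (\<alpha>\<^sub>i - 2 k) X\<^sub>i\<^sup>k\<close>; \<open>raise\<close> is the sum of the second operators over all variables.\<close>

definition raise_coeff :: "(nat \<Rightarrow>\<^sub>0 nat) \<Rightarrow> nat \<Rightarrow> (nat \<Rightarrow>\<^sub>0 nat) \<Rightarrow> 'a::comm_ring_1" where
  "raise_coeff \<alpha> i \<beta> =
     of_nat (Poly_Mapping.lookup \<beta> i + 1) * (of_nat (Poly_Mapping.lookup \<alpha> i) - of_nat (Poly_Mapping.lookup \<beta> i))"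

definition raise :: "nat \<Rightarrow> (nat \<Rightarrow>\<^sub>0 nat) \<Rightarrow> 'a::comm_ring_1 mpoly \<Rightarrow> 'a mpoly" where
  "raise c \<alpha> H = (\<Sum>i<c. X i * Poly_Mapping.mapp (\<lambda>\<beta> v. raise_coeff \<alpha> i \<beta> * v) H)"

lemma lookup_contract_sum_vars:
  "Poly_Mapping.lookup (contract (sum_vars c) H) \<beta> = (\<Sum>i<c. Poly_Mapping.lookup H (\<beta> + unit_vec i))"
  by (simp add: sum_vars_def contract_sum_left lookup_sum lookup_contract_X)

lemma lookup_mapp_mult:
  fixes H :: "'a::comm_ring_1 mpoly"
  shows "Poly_Mapping.lookup (Poly_Mapping.mapp (\<lambda>\<beta> v. w \<beta> * v) H) \<beta> = w \<beta> * Poly_Mapping.lookup H \<beta>"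
  by (simp add: lookup_mapp when_def in_keys_iff)

lemma lookup_raise:
  "Poly_Mapping.lookup (raise c \<alpha> H) \<gamma> =
    (\<Sum>i<c. if 1 \<le> Poly_Mapping.lookup \<gamma> i
           then raise_coeff \<alpha> i (\<gamma> - unit_vec i) * Poly_Mapping.lookup H (\<gamma> - unit_vec i) else 0)"
  unfolding raise_def lookup_sum lookup_X_mult lookup_mapp_mult ..

lemma raise_add: "raise c \<alpha> (H + G) = raise c \<alpha> H + raise c \<alpha> G"
proof (rule poly_mapping_eqI)
  fix \<gamma>
  show "Poly_Mapping.lookup (raise c \<alpha> (H + G)) \<gamma> = Poly_Mapping.lookup (raise c \<alpha> H + raise c \<alpha> G) \<gamma>"
    unfolding lookup_add lookup_raise sum.distrib[symmetric] by (intro sum.cong refl) (simp add: distrib_left)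
qed

lemma raise_C_mult: "raise c \<alpha> (C a * H) = C a * raise c \<alpha> H"
proof (rule poly_mapping_eqI)
  fix \<gamma>
  show "Poly_Mapping.lookup (raise c \<alpha> (C a * H)) \<gamma> = Poly_Mapping.lookup (C a * raise c \<alpha> H) \<gamma>"
    unfolding lookup_C_mult lookup_raise sum_distrib_left by (intro sum.cong refl) (simp add: mult.left_commute)
qed

lemma lookup_add_unit_vec:
  "Poly_Mapping.lookup (\<beta> + unit_vec i) j = Poly_Mapping.lookup \<beta> j + (if i = j then 1 else 0)"
  by (simp add: lookup_add lookup_unit_vec)

lemma lookup_diff_unit_vec:
  "Poly_Mapping.lookup (\<beta> - unit_vec i) j = Poly_Mapping.lookup \<beta> j - (if i = j then 1 else 0)"
  by (simp add: lookup_minus lookup_unit_vec)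

lemma diff_add_unit_vec: "1 \<le> Poly_Mapping.lookup \<beta> i \<Longrightarrow> \<beta> - unit_vec i + unit_vec i = \<beta>"
  by (rule poly_mapping_eqI) (auto simp: lookup_add lookup_minus lookup_unit_vec)

lemma raise_commutator_diag:
  fixes H :: "'a::comm_ring_1 mpoly"
  shows "(if 1 \<le> Poly_Mapping.lookup (\<beta> + unit_vec i) i
          then raise_coeff \<alpha> i (\<beta> + unit_vec i - unit_vec i) * Poly_Mapping.lookup H (\<beta> + unit_vec i - unit_vec i)
          else 0)
       - (if 1 \<le> Poly_Mapping.lookup \<beta> i
          then raise_coeff \<alpha> i (\<beta> - unit_vec i) * Poly_Mapping.lookup H (\<beta> - unit_vec i + unit_vec i)
          else 0)
       = (of_nat (Poly_Mapping.lookup \<alpha> i) - 2 * of_nat (Poly_Mapping.lookup \<beta> i)) * Poly_Mapping.lookup H \<beta>"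
proof (cases "1 \<le> Poly_Mapping.lookup \<beta> i")
  case True
  then have "\<beta> - unit_vec i + unit_vec i = \<beta>" by (rule diff_add_unit_vec)
  with True show ?thesis
    unfolding add_diff_cancel_right'
    by (simp add: lookup_add_unit_vec raise_coeff_def lookup_diff_unit_vec of_nat_diff algebra_simps)
next
  case False
  then have "Poly_Mapping.lookup \<beta> i = 0" by simp
  then show ?thesis by (simp add: lookup_add_unit_vec raise_coeff_def)
qed

lemma raise_commutator_off_diag:
  assumes "i \<noteq> j"
  shows "(if 1 \<le> Poly_Mapping.lookup (\<beta> + unit_vec i) j
          then raise_coeff \<alpha> j (\<beta> + unit_vec i - unit_vec j) * Poly_Mapping.lookup H (\<beta> + unit_vec i - unit_vec j)
          else 0)
       = (if 1 \<le> Poly_Mapping.lookup \<beta> j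
          then raise_coeff \<alpha> j (\<beta> - unit_vec j) * Poly_Mapping.lookup H (\<beta> - unit_vec j + unit_vec i)
          else (0::'a::comm_ring_1))"
proof (cases "1 \<le> Poly_Mapping.lookup \<beta> j")
  case True
  have shift: "\<beta> + unit_vec i - unit_vec j = \<beta> - unit_vec j + unit_vec i"
    by (rule poly_mapping_eqI) (use True assms in \<open>auto simp: lookup_add lookup_minus lookup_unit_vec\<close>)
  have coeff: "raise_coeff \<alpha> j (\<beta> - unit_vec j + unit_vec i) = raise_coeff \<alpha> j (\<beta> - unit_vec j)"
    using assms by (simp add: raise_coeff_def lookup_add_unit_vec)
  have "Poly_Mapping.lookup (\<beta> + unit_vec i) j = Poly_Mapping.lookup \<beta> j"
    using assms by (simp add: lookup_add_unit_vec)
  then show ?thesis unfolding shift coeff by (rule arg_cong)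
qed (use assms in \<open>simp add: lookup_add_unit_vec\<close>)

lemma lookup_raise_commutator:
  fixes H :: "'a::comm_ring_1 mpoly"
  shows "Poly_Mapping.lookup (contract (sum_vars c) (raise c \<alpha> H)) \<beta>
       - Poly_Mapping.lookup (raise c \<alpha> (contract (sum_vars c) H)) \<beta>
     = (\<Sum>i<c. of_nat (Poly_Mapping.lookup \<alpha> i) - 2 * of_nat (Poly_Mapping.lookup \<beta> i)) * Poly_Mapping.lookup H \<beta>"
proof -
  define T1 where "T1 i j = (if 1 \<le> Poly_Mapping.lookup (\<beta> + unit_vec i) j
    then raise_coeff \<alpha> j (\<beta> + unit_vec i - unit_vec j) * Poly_Mapping.lookup H (\<beta> + unit_vec i - unit_vec j) else 0)"
    for i j
  define T2 where "T2 i j = (if 1 \<le> Poly_Mapping.lookup \<beta> j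
    then raise_coeff \<alpha> j (\<beta> - unit_vec j) * Poly_Mapping.lookup H (\<beta> - unit_vec j + unit_vec i) else 0)"
    for i j
  have diag: "T1 i i - T2 i i =
      (of_nat (Poly_Mapping.lookup \<alpha> i) - 2 * of_nat (Poly_Mapping.lookup \<beta> i)) * Poly_Mapping.lookup H \<beta>" for i
    unfolding T1_def T2_def by (rule raise_commutator_diag)
  have off_diag: "T1 i j = T2 i j" if "i \<noteq> j" for i j
    unfolding T1_def T2_def by (rule raise_commutator_off_diag[OF that])
  have "Poly_Mapping.lookup (contract (sum_vars c) (raise c \<alpha> H)) \<beta> = (\<Sum>i<c. \<Sum>j<c. T1 i j)"
    by (simp add: lookup_contract_sum_vars lookup_raise T1_def)
  moreover have "Poly_Mapping.lookup (raise c \<alpha> (contract (sum_vars c) H)) \<beta> = (\<Sum>j<c. \<Sum>i<c. T2 i j)"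
    unfolding lookup_raise lookup_contract_sum_vars T2_def sum_distrib_left by (intro sum.cong refl) auto
  moreover have "(\<Sum>j<c. \<Sum>i<c. T2 i j) = (\<Sum>i<c. \<Sum>j<c. T2 i j)"
    by (rule sum.swap)
  ultimately have "Poly_Mapping.lookup (contract (sum_vars c) (raise c \<alpha> H)) \<beta>
      - Poly_Mapping.lookup (raise c \<alpha> (contract (sum_vars c) H)) \<beta>
      = (\<Sum>i<c. \<Sum>j<c. T1 i j - T2 i j)"
    by (simp add: sum_subtractf)
  also have "\<dots> = (\<Sum>i<c. T1 i i - T2 i i)"
  proof (intro sum.cong refl)
    fix i assume "i \<in> {..<c}"
    have "(\<Sum>j<c. T1 i j - T2 i j) = (\<Sum>j<c. if j = i then T1 i i - T2 i i else 0)"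
      by (intro sum.cong refl) (simp add: off_diag)
    also have "\<dots> = T1 i i - T2 i i" using \<open>i \<in> {..<c}\<close> by simp
    finally show "(\<Sum>j<c. T1 i j - T2 i j) = T1 i i - T2 i i" .
  qed
  finally show ?thesis by (simp add: diag sum_distrib_right)
qed

lemma sum_weights_eq_tdeg:
  assumes "Poly_Mapping.keys \<alpha> \<subseteq> {..<c}" "mdvd \<beta> \<alpha>"
  shows "(\<Sum>i<c. of_nat (Poly_Mapping.lookup \<alpha> i) - 2 * of_nat (Poly_Mapping.lookup \<beta> i))
       = (of_nat (tdeg \<alpha>) - 2 * of_nat (tdeg \<beta>) :: 'a::comm_ring_1)"
proof -
  have "Poly_Mapping.keys \<beta> \<subseteq> Poly_Mapping.keys \<alpha>"
  proof
    fix i assume "i \<in> Poly_Mapping.keys \<beta>"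
    then show "i \<in> Poly_Mapping.keys \<alpha>"
      using assms(2) unfolding mdvd_def in_keys_iff by (metis le_zero_eq)
  qed
  then have "Poly_Mapping.keys \<beta> \<subseteq> {..<c}" using assms(1) by blast
  then show ?thesis
    using tdeg_sum_superset[OF _ assms(1)] tdeg_sum_superset[of "{..<c}" \<beta>]
    by (simp add: sum_subtractf sum_distrib_left)
qed

lemma contract_sum_vars_raise:
  assumes "Poly_Mapping.keys \<alpha> \<subseteq> {..<c}" and H: "H \<in> inv_system \<alpha> m"
  shows "contract (sum_vars c) (raise c \<alpha> H) =
    raise c \<alpha> (contract (sum_vars c) H) + C (of_int (int (tdeg \<alpha>) - 2 * int m)) * (H :: 'a::comm_ring_1 mpoly)"
proof (rule poly_mapping_eqI)
  fix \<beta>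
  have "(\<Sum>i<c. of_nat (Poly_Mapping.lookup \<alpha> i) - 2 * of_nat (Poly_Mapping.lookup \<beta> i)) * Poly_Mapping.lookup H \<beta>
       = (of_int (int (tdeg \<alpha>) - 2 * int m) :: 'a) * Poly_Mapping.lookup H \<beta>"
  proof (cases "\<beta> \<in> Poly_Mapping.keys H")
    case True
    then have "mdvd \<beta> \<alpha>" "tdeg \<beta> = m" using H by (auto simp: inv_system_def)
    then show ?thesis using sum_weights_eq_tdeg[OF assms(1), where 'a = 'a] by simp
  qed (simp add: in_keys_iff)
  then have "Poly_Mapping.lookup (contract (sum_vars c) (raise c \<alpha> H)) \<beta>
      - Poly_Mapping.lookup (raise c \<alpha> (contract (sum_vars c) H)) \<beta>
      = of_int (int (tdeg \<alpha>) - 2 * int m) * Poly_Mapping.lookup H \<beta>"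
    by (simp only: lookup_raise_commutator)
  then show "Poly_Mapping.lookup (contract (sum_vars c) (raise c \<alpha> H)) \<beta> =
      Poly_Mapping.lookup (raise c \<alpha> (contract (sum_vars c) H) + C (of_int (int (tdeg \<alpha>) - 2 * int m)) * H) \<beta>"
    unfolding lookup_add lookup_C_mult by (metis add.commute diff_add_cancel)
qed

lemma subspace_inv_system: "module.subspace (\<lambda>a p. C a * p) (inv_system \<alpha> m :: 'a::comm_ring_1 mpoly set)"
  unfolding module.subspace_def[OF module_C_mult] inv_system_def
  using keys_add keys_C_mult_subset by fastforce

lemma inv_system_above:
  assumes "tdeg \<alpha> < m" "H \<in> inv_system \<alpha> m"
  shows "H = 0"
proof -
  have "Poly_Mapping.keys H = {}"
    using assms tdeg_mono by (fastforce simp: inv_system_def)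
  then show ?thesis by simp
qed

lemma contract_sum_vars_inv_system:
  assumes H: "H \<in> inv_system \<alpha> m"
  shows "contract (sum_vars c) H \<in> inv_system \<alpha> (m - 1)"
  unfolding inv_system_def
proof (intro CollectI ballI)
  fix \<beta> assume "\<beta> \<in> Poly_Mapping.keys (contract (sum_vars c) H)"
  then have "(\<Sum>i<c. Poly_Mapping.lookup H (\<beta> + unit_vec i)) \<noteq> 0"
    by (simp add: in_keys_iff lookup_contract_sum_vars)
  then obtain i where "Poly_Mapping.lookup H (\<beta> + unit_vec i) \<noteq> 0"
    by (meson sum.not_neutral_contains_not_neutral)
  then have "mdvd (\<beta> + unit_vec i) \<alpha>" "tdeg (\<beta> + unit_vec i) = m"
    using H by (auto simp: inv_system_def in_keys_iff)
  then show "mdvd \<beta> \<alpha> \<and> tdeg \<beta> = m - 1"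
    using mdvd_trans[OF mdvd_refl_add] by (auto simp: tdeg_add)
qed

lemma contract_sum_vars_inv_system_0:
  assumes H: "H \<in> inv_system \<alpha> 0"
  shows "contract (sum_vars c) H = 0"
proof -
  have "Poly_Mapping.lookup H (\<beta> + unit_vec i) = 0" for \<beta> i
  proof (rule ccontr)
    assume "Poly_Mapping.lookup H (\<beta> + unit_vec i) \<noteq> 0"
    then have "tdeg (\<beta> + unit_vec i) = 0" using H by (simp add: inv_system_def in_keys_iff)
    then show False by (simp add: tdeg_add)
  qed
  then show ?thesis
    by (intro poly_mapping_eqI) (simp add: lookup_contract_sum_vars)
qed

lemma raise_inv_system:
  fixes H :: "'a::{comm_ring_1, ring_char_0} mpoly"
  assumes H: "H \<in> inv_system \<alpha> m"
  shows "raise c \<alpha> H \<in> inv_system \<alpha> (Suc m)"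
  unfolding inv_system_def
proof (intro CollectI ballI)
  fix \<gamma> assume "\<gamma> \<in> Poly_Mapping.keys (raise c \<alpha> H)"
  then obtain i where "i \<in> {..<c}" "(if 1 \<le> Poly_Mapping.lookup \<gamma> i
      then raise_coeff \<alpha> i (\<gamma> - unit_vec i) * Poly_Mapping.lookup H (\<gamma> - unit_vec i) else 0) \<noteq> 0"
    unfolding in_keys_iff lookup_raise by (rule sum.not_neutral_contains_not_neutral)
  then have i: "1 \<le> Poly_Mapping.lookup \<gamma> i"
    and ne: "Poly_Mapping.lookup \<alpha> i \<noteq> Poly_Mapping.lookup \<gamma> i - 1"
    and "\<gamma> - unit_vec i \<in> Poly_Mapping.keys H"
    by (auto simp: raise_coeff_def lookup_diff_unit_vec in_keys_iff split: if_splits)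
  then have d: "mdvd (\<gamma> - unit_vec i) \<alpha>" and t: "tdeg (\<gamma> - unit_vec i) = m"
    using H by (auto simp: inv_system_def)
  have "mdvd \<gamma> \<alpha>"
    unfolding mdvd_def
  proof
    fix j
    show "Poly_Mapping.lookup \<gamma> j \<le> Poly_Mapping.lookup \<alpha> j"
      using d ne i unfolding mdvd_def lookup_diff_unit_vec by (cases "i = j") (auto dest: spec[of _ j])
  qed
  moreover have "tdeg \<gamma> = Suc m"
    using tdeg_mdvd[of "unit_vec i" \<gamma>] i t by (simp add: mdvd_unit_vec)
  ultimately show "mdvd \<gamma> \<alpha> \<and> tdeg \<gamma> = Suc m" by simp
qed

lemma graded_sl2_monomial:
  assumes "Poly_Mapping.keys \<alpha> \<subseteq> {..<c}"
  shows "graded_sl2 (\<lambda>a (p :: 'a::field_char_0 mpoly). C a * p) (contract (sum_vars c)) (raise c \<alpha>)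
           (inv_system \<alpha>) (int (tdeg \<alpha>)) (tdeg \<alpha>)"
  unfolding graded_sl2_def graded_sl2_axioms_def Vector_Spaces.linear_iff
  by (simp add: vector_space_C_mult subspace_inv_system contract_sum_vars_inv_system[unfolded One_nat_def]
      contract_sum_vars_inv_system_0 raise_inv_system inv_system_above contract_sum_vars_raise[OF assms]
      contract_add_right contract_C_mult_right raise_add raise_C_mult)

section \<open>Monomial complete intersections\<close>

definition gen_ideal :: "nat \<Rightarrow> (nat \<Rightarrow> 'a::comm_ring_1 mpoly) \<Rightarrow> 'a mpoly set" where
  "gen_ideal c g = {\<Sum>j<c. h j * g j | h. \<forall>j<c. in_vars c (h j)}"

lemma gen_idealI:
  "x = (\<Sum>j<c. h j * g j) \<Longrightarrow> (\<And>j. j < c \<Longrightarrow> in_vars c (h j)) \<Longrightarrow> x \<in> gen_ideal c g"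
  unfolding gen_ideal_def by blast

lemma complete_intersection_AF_iff:
  "complete_intersection_AF c F \<longleftrightarrow> (\<exists>g. (\<forall>j<c. in_vars c (g j)) \<and> Ann c F = gen_ideal c g)"
  by (simp add: complete_intersection_AF_def gen_ideal_def)

lemma in_gen_ideal_sum:
  "(\<And>i. i \<in> I \<Longrightarrow> p i \<in> gen_ideal c g) \<Longrightarrow> (\<Sum>i\<in>I. p i) \<in> gen_ideal c g"
proof (induction I rule: infinite_finite_induct)
  case (insert i I)
  then have "p i \<in> gen_ideal c g" "(\<Sum>i\<in>I. p i) \<in> gen_ideal c g" by simp_all
  then obtain h h' where "p i = (\<Sum>j<c. h j * g j)" "\<forall>j<c. in_vars c (h j)"
    and "(\<Sum>i\<in>I. p i) = (\<Sum>j<c. h' j * g j)" "\<forall>j<c. in_vars c (h' j)"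
    unfolding gen_ideal_def by blast
  with insert.hyps show ?case
    by (intro gen_idealI[where h = "\<lambda>j. h j + h' j"]) (simp_all add: in_vars_add distrib_right sum.distrib)
qed (auto intro: gen_idealI[where h = "\<lambda>_. 0"])

lemma in_gen_ideal_C_mult: "p \<in> gen_ideal c g \<Longrightarrow> C a * p \<in> gen_ideal c g"
  unfolding gen_ideal_def
  by (force simp: sum_distrib_left mult.assoc intro: in_vars_mult in_vars_C)

lemma contract_monomial_eq_0_iff:
  "contract g (Poly_Mapping.single \<alpha> (1::'a::comm_ring_1)) = 0 \<longleftrightarrow>
     (\<forall>\<gamma>. mdvd \<gamma> \<alpha> \<longrightarrow> Poly_Mapping.lookup g \<gamma> = 0)"
proof
  assume "contract g (Poly_Mapping.single \<alpha> 1) = 0"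
  then show "\<forall>\<gamma>. mdvd \<gamma> \<alpha> \<longrightarrow> Poly_Mapping.lookup g \<gamma> = 0"
    by (metis lookup_contract_monomial lookup_zero mdvd_diff mdvd_diff_diff)
qed (intro poly_mapping_eqI, simp add: lookup_contract_monomial mdvd_diff)

lemma contract_monomial_above:
  assumes "g \<in> Rdeg c n" "tdeg \<alpha> < n"
  shows "contract g (Poly_Mapping.single \<alpha> (1::'a::comm_ring_1)) = 0"
  unfolding contract_monomial_eq_0_iff
proof (intro allI impI)
  fix \<gamma> assume "mdvd \<gamma> \<alpha>"
  then have "\<gamma> \<notin> Poly_Mapping.keys g"
    using assms tdeg_mono[of \<gamma> \<alpha>] by (auto simp: Rdeg_def homog_def)
  then show "Poly_Mapping.lookup g \<gamma> = 0" by (simp add: in_keys_iff)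
qed

lemma artinian_monomial: "artinian_AF c (Poly_Mapping.single \<alpha> (1::'a::comm_ring_1))"
  unfolding artinian_AF_def Ann_def
  using contract_monomial_above by (fastforce simp: Rdeg_def intro!: exI[of _ "Suc (tdeg \<alpha>)"])

lemma codim_monomial:
  assumes "\<And>i. i < c \<Longrightarrow> 1 \<le> Poly_Mapping.lookup \<alpha> i"
  shows "codim_AF c (Poly_Mapping.single \<alpha> (1::'a::comm_ring_1))"
  unfolding codim_AF_def
proof (intro ballI impI)
  fix l :: "'a mpoly" assume l: "l \<in> Rdeg c 1" and "l \<in> Ann c (Poly_Mapping.single \<alpha> 1)"
  then have vanish: "Poly_Mapping.lookup l \<gamma> = 0" if "mdvd \<gamma> \<alpha>" for \<gamma>
    using that by (simp add: Ann_def contract_monomial_eq_0_iff)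
  have "mdvd \<gamma> \<alpha>" if "\<gamma> \<in> Poly_Mapping.keys l" for \<gamma>
    unfolding mdvd_def
  proof
    fix i
    show "Poly_Mapping.lookup \<gamma> i \<le> Poly_Mapping.lookup \<alpha> i"
    proof (cases "i \<in> Poly_Mapping.keys \<gamma>")
      case True
      have "tdeg \<gamma> = 1" "Poly_Mapping.keys \<gamma> \<subseteq> {..<c}"
        using l that by (auto simp: Rdeg_def homog_def in_vars_def)
      then show ?thesis using True assms lookup_le_tdeg[of \<gamma> i] by force
    qed (simp add: in_keys_iff)
  qed
  then have "Poly_Mapping.lookup l \<gamma> = 0" for \<gamma> using vanish by (metis in_keys_iff)
  then show "l = 0" by (intro poly_mapping_eqI) simp
qed

definition pow_gens :: "(nat \<Rightarrow>\<^sub>0 nat) \<Rightarrow> nat \<Rightarrow> 'a::comm_ring_1 mpoly" where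
  "pow_gens \<alpha> j = Poly_Mapping.single (Poly_Mapping.single j (Poly_Mapping.lookup \<alpha> j + 1)) 1"

lemma gen_ideal_subset_Ann_monomial:
  "gen_ideal c (pow_gens \<alpha>) \<subseteq> Ann c (Poly_Mapping.single \<alpha> (1::'a::comm_ring_1))"
proof
  fix g :: "'a mpoly" assume "g \<in> gen_ideal c (pow_gens \<alpha>)"
  then obtain h where g: "g = (\<Sum>j<c. h j * pow_gens \<alpha> j)" and h: "\<forall>j<c. in_vars c (h j)"
    unfolding gen_ideal_def by blast
  have "in_vars c g"
    unfolding g using h by (intro in_vars_sum in_vars_mult) (simp_all add: pow_gens_def in_vars_single)
  moreover have "contract (pow_gens \<alpha> j) (Poly_Mapping.single \<alpha> (1::'a)) = 0" for j
    unfolding pow_gens_def contract_monomial_eq_0_iff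
    by (auto simp: mdvd_def lookup_single when_def dest: spec[of _ j])
  ultimately show "g \<in> Ann c (Poly_Mapping.single \<alpha> 1)"
    by (simp add: Ann_def g contract_sum_left contract_mult)
qed

lemma monomial_in_gen_ideal:
  assumes "Poly_Mapping.keys \<gamma> \<subseteq> {..<c}" "\<not> mdvd \<gamma> \<alpha>"
  shows "Poly_Mapping.single \<gamma> (1::'a::comm_ring_1) \<in> gen_ideal c (pow_gens \<alpha>)"
proof -
  obtain j where j: "Poly_Mapping.lookup \<alpha> j < Poly_Mapping.lookup \<gamma> j"
    using assms(2) by (auto simp: mdvd_def not_le)
  then have "j \<in> Poly_Mapping.keys \<gamma>" by (simp add: in_keys_iff)
  with assms(1) have "j < c" by blast
  define s where "s = Poly_Mapping.single j (Poly_Mapping.lookup \<alpha> j + 1)"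
  have "mdvd s \<gamma>" using j by (auto simp: mdvd_def s_def lookup_single when_def)
  then have "\<gamma> - s + s = \<gamma>" using mdvd_add_diff by (simp add: add.commute)
  then have "Poly_Mapping.single (\<gamma> - s) 1 * pow_gens \<alpha> j = Poly_Mapping.single \<gamma> (1::'a)"
    unfolding pow_gens_def s_def[symmetric] mult_single by simp
  define h where "h i = (if i = j then Poly_Mapping.single (\<gamma> - s) (1::'a) else 0)" for i
  have "(\<Sum>i<c. h i * pow_gens \<alpha> i) = (\<Sum>i<c. if i = j then h j * pow_gens \<alpha> j else 0)"
    by (rule sum.cong) (simp_all add: h_def)
  also have "\<dots> = Poly_Mapping.single \<gamma> 1"
    using \<open>j < c\<close> \<open>Poly_Mapping.single (\<gamma> - s) 1 * pow_gens \<alpha> j = Poly_Mapping.single \<gamma> 1\<close>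
    by (simp add: h_def)
  finally have sum_eq: "(\<Sum>i<c. h i * pow_gens \<alpha> i) = Poly_Mapping.single \<gamma> 1" .
  have h_vars: "in_vars c (h i)" for i
    using assms(1) keys_diff_subset[of \<gamma> s] by (simp add: h_def in_vars_single)
  show ?thesis
    using sum_eq h_vars by (intro gen_idealI[where h = h]) simp_all
qed

lemma Ann_monomial_subset_gen_ideal:
  "Ann c (Poly_Mapping.single \<alpha> (1::'a::comm_ring_1)) \<subseteq> gen_ideal c (pow_gens \<alpha>)"
proof
  fix g :: "'a mpoly" assume g: "g \<in> Ann c (Poly_Mapping.single \<alpha> 1)"
  have "C (Poly_Mapping.lookup g \<gamma>) * Poly_Mapping.single \<gamma> 1 \<in> gen_ideal c (pow_gens \<alpha>)"
    if "\<gamma> \<in> Poly_Mapping.keys g" for \<gamma>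
  proof (intro in_gen_ideal_C_mult monomial_in_gen_ideal)
    show "Poly_Mapping.keys \<gamma> \<subseteq> {..<c}" using g that by (simp add: Ann_def in_vars_def)
    show "\<not> mdvd \<gamma> \<alpha>" using g that by (auto simp: Ann_def contract_monomial_eq_0_iff in_keys_iff)
  qed
  then have "(\<Sum>\<gamma>\<in>Poly_Mapping.keys g. C (Poly_Mapping.lookup g \<gamma>) * Poly_Mapping.single \<gamma> 1) \<in> gen_ideal c (pow_gens \<alpha>)"
    by (rule in_gen_ideal_sum)
  moreover have "(\<Sum>\<gamma>\<in>Poly_Mapping.keys g. C (Poly_Mapping.lookup g \<gamma>) * Poly_Mapping.single \<gamma> 1) = g"
    by (simp add: C_def mult_single poly_mapping_sum_singles)
  ultimately show "g \<in> gen_ideal c (pow_gens \<alpha>)" by simp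
qed

lemma complete_intersection_monomial:
  "complete_intersection_AF c (Poly_Mapping.single \<alpha> (1::'a::comm_ring_1))"
  unfolding complete_intersection_AF_iff
proof (intro exI conjI)
  show "\<forall>j<c. in_vars c (pow_gens \<alpha> j :: 'a mpoly)"
    by (simp add: pow_gens_def in_vars_def)
  show "Ann c (Poly_Mapping.single \<alpha> 1) = gen_ideal c (pow_gens \<alpha>)"
    by (rule equalityI[OF Ann_monomial_subset_gen_ideal gen_ideal_subset_Ann_monomial])
qed

lemma contract_monomial_in_inv_system:
  assumes "g \<in> Rdeg c i"
  shows "contract g (Poly_Mapping.single \<alpha> (1::'a::comm_ring_1)) \<in> inv_system \<alpha> (tdeg \<alpha> - i)"
  unfolding inv_system_def
proof (intro CollectI ballI)
  fix \<beta> assume "\<beta> \<in> Poly_Mapping.keys (contract g (Poly_Mapping.single \<alpha> (1::'a)))"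
  then have d: "mdvd \<beta> \<alpha>" and "\<alpha> - \<beta> \<in> Poly_Mapping.keys g"
    by (auto simp: in_keys_iff lookup_contract_monomial split: if_splits)
  then have "tdeg (\<alpha> - \<beta>) = i" using assms by (simp add: Rdeg_def homog_def)
  then show "mdvd \<beta> \<alpha> \<and> tdeg \<beta> = tdeg \<alpha> - i" using tdeg_mdvd[OF d] d by simp
qed

lemma inv_system_eq_contract_monomial:
  assumes \<alpha>: "Poly_Mapping.keys \<alpha> \<subseteq> {..<c}" and H: "H \<in> inv_system \<alpha> m"
  shows "\<exists>g\<in>Rdeg c (tdeg \<alpha> - m). contract g (Poly_Mapping.single \<alpha> (1::'a::comm_ring_1)) = H"
proof
  define g where "g = (\<Sum>\<beta>\<in>Poly_Mapping.keys H. Poly_Mapping.single (\<alpha> - \<beta>) (Poly_Mapping.lookup H \<beta>))"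
  have H_keys: "mdvd \<beta> \<alpha>" "tdeg \<beta> = m" if "\<beta> \<in> Poly_Mapping.keys H" for \<beta>
    using H that by (auto simp: inv_system_def)
  have "contract g (Poly_Mapping.single \<alpha> 1) =
      (\<Sum>\<beta>\<in>Poly_Mapping.keys H. Poly_Mapping.single \<beta> (Poly_Mapping.lookup H \<beta>))"
    unfolding g_def contract_sum_left
    by (intro sum.cong refl) (simp add: contract_single_monomial mdvd_diff mdvd_diff_diff H_keys)
  then show "contract g (Poly_Mapping.single \<alpha> 1) = H"
    by (simp add: poly_mapping_sum_singles)
  have "homog (tdeg \<alpha> - m) (Poly_Mapping.single (\<alpha> - \<beta>) (Poly_Mapping.lookup H \<beta>))"
    if "\<beta> \<in> Poly_Mapping.keys H" for \<beta>
    using homog_single[of "\<alpha> - \<beta>"] tdeg_mdvd[OF H_keys(1)[OF that]] H_keys(2)[OF that] by simp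
  then show "g \<in> Rdeg c (tdeg \<alpha> - m)"
    unfolding Rdeg_def g_def using \<alpha> keys_diff_subset
    by (blast intro: in_vars_sum in_vars_single homog_sum)
qed

lemma sum_vars_Rdeg: "sum_vars c \<in> Rdeg c 1"
  unfolding Rdeg_def sum_vars_def by (intro CollectI conjI in_vars_sum homog_sum in_vars_X homog_X) simp_all

lemma contract_sum_vars_pow_mult:
  "contract (sum_vars c ^ k * g) F = (contract (sum_vars c) ^^ k) (contract g F)"
  by (simp add: contract_mult contract_power)

definition mult_pow_inj :: "nat \<Rightarrow> 'a::comm_ring_1 mpoly \<Rightarrow> 'a mpoly \<Rightarrow> nat \<Rightarrow> nat \<Rightarrow> bool" where
  "mult_pow_inj c F l k i \<longleftrightarrow> (\<forall>g\<in>Rdeg c i. l ^ k * g \<in> Ann c F \<longrightarrow> g \<in> Ann c F)"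

definition mult_pow_surj :: "nat \<Rightarrow> 'a::comm_ring_1 mpoly \<Rightarrow> 'a mpoly \<Rightarrow> nat \<Rightarrow> nat \<Rightarrow> bool" where
  "mult_pow_surj c F l k i \<longleftrightarrow> (\<forall>h\<in>Rdeg c (i + k). \<exists>g\<in>Rdeg c i. h - l ^ k * g \<in> Ann c F)"

lemma strong_lefschetz_AF_iff:
  "strong_lefschetz_AF c F \<longleftrightarrow>
     (\<exists>l\<in>Rdeg c 1. \<forall>i k. 1 \<le> k \<longrightarrow> mult_pow_inj c F l k i \<or> mult_pow_surj c F l k i)"
  by (simp add: strong_lefschetz_AF_def mult_pow_inj_def mult_pow_surj_def)

lemma mult_pow_inj_monomial:
  assumes "Poly_Mapping.keys \<alpha> \<subseteq> {..<c}" "2 * i + k \<le> tdeg \<alpha>"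
  shows "mult_pow_inj c (Poly_Mapping.single \<alpha> (1::'a::field_char_0)) (sum_vars c) k i"
  unfolding mult_pow_inj_def
proof (intro ballI impI)
  interpret graded_sl2 "\<lambda>a (p :: 'a mpoly). C a * p" "contract (sum_vars c)" "raise c \<alpha>"
    "inv_system \<alpha>" "int (tdeg \<alpha>)" "tdeg \<alpha>"
    by (rule graded_sl2_monomial[OF assms(1)])
  fix g :: "'a mpoly" assume g: "g \<in> Rdeg c i" and "sum_vars c ^ k * g \<in> Ann c (Poly_Mapping.single \<alpha> 1)"
  then have "(contract (sum_vars c) ^^ k) (contract g (Poly_Mapping.single \<alpha> 1)) = 0"
    by (simp add: Ann_def contract_sum_vars_pow_mult)
  moreover have "int (tdeg \<alpha>) - 2 * int (tdeg \<alpha> - i) + int k \<le> 0" using assms(2) by simp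
  ultimately have "contract g (Poly_Mapping.single \<alpha> 1) = 0"
    using e_pow_eq_0_imp_eq_0[OF contract_monomial_in_inv_system[OF g]] by blast
  then show "g \<in> Ann c (Poly_Mapping.single \<alpha> 1)"
    using g by (simp add: Ann_def Rdeg_def)
qed

lemma mult_pow_surj_monomial:
  assumes \<alpha>: "Poly_Mapping.keys \<alpha> \<subseteq> {..<c}" and "tdeg \<alpha> < 2 * i + k"
  shows "mult_pow_surj c (Poly_Mapping.single \<alpha> (1::'a::field_char_0)) (sum_vars c) k i"
  unfolding mult_pow_surj_def
proof
  interpret graded_sl2 "\<lambda>a (p :: 'a mpoly). C a * p" "contract (sum_vars c)" "raise c \<alpha>"
    "inv_system \<alpha>" "int (tdeg \<alpha>)" "tdeg \<alpha>"
    by (rule graded_sl2_monomial[OF \<alpha>])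
  let ?F = "Poly_Mapping.single \<alpha> (1::'a)"
  fix h :: "'a mpoly" assume h: "h \<in> Rdeg c (i + k)"
  have "\<exists>g\<in>Rdeg c i. contract h ?F = contract (sum_vars c ^ k * g) ?F"
  proof (cases "tdeg \<alpha> < i + k")
    case True
    have "0 \<in> Rdeg c i" by (simp add: Rdeg_def)
    then show ?thesis using contract_monomial_above[OF h True] by force
  next
    case False
    then have "int k \<le> int (tdeg \<alpha>) - 2 * int (tdeg \<alpha> - (i + k))" using assms(2) by simp
    then obtain v where "v \<in> inv_system \<alpha> (tdeg \<alpha> - (i + k) + k)"
      and ev: "(contract (sum_vars c) ^^ k) v = contract h ?F"
      using e_pow_surj[OF contract_monomial_in_inv_system[OF h]] by blast
    moreover have "tdeg \<alpha> - (i + k) + k = tdeg \<alpha> - i" "tdeg \<alpha> - (tdeg \<alpha> - i) = i"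
      using False by simp_all
    ultimately obtain g where g: "g \<in> Rdeg c i" "contract g ?F = v"
      using inv_system_eq_contract_monomial[OF \<alpha>, of v "tdeg \<alpha> - i"] by auto
    show ?thesis
      using g ev by (intro bexI[of _ g]) (simp_all add: contract_sum_vars_pow_mult)
  qed
  then show "\<exists>g\<in>Rdeg c i. h - sum_vars c ^ k * g \<in> Ann c ?F"
    using h sum_vars_Rdeg
    by (auto simp: Ann_def Rdeg_def contract_diff_left intro!: in_vars_diff in_vars_mult in_vars_power)
qed

lemma strong_lefschetz_monomial:
  assumes "Poly_Mapping.keys \<alpha> \<subseteq> {..<c}"
  shows "strong_lefschetz_AF c (Poly_Mapping.single \<alpha> (1::'a::field_char_0))"
  unfolding strong_lefschetz_AF_iff
  using sum_vars_Rdeg mult_pow_inj_monomial[OF assms] mult_pow_surj_monomial[OF assms]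
  by (metis not_le)

section \<open>Transport along graded automorphisms\<close>

locale Ann_transfer =
  fixes c :: nat and \<phi> \<psi> :: "'a::comm_ring_1 mpoly \<Rightarrow> 'a mpoly" and F F\<^sub>0 :: "'a mpoly"
  assumes \<phi>_add: "\<phi> (p + q) = \<phi> p + \<phi> q"
    and \<phi>_mult: "\<phi> (p * q) = \<phi> p * \<phi> q"
    and \<psi>_\<phi>: "\<psi> (\<phi> p) = p"
    and \<phi>_\<psi>: "\<phi> (\<psi> p) = p"
    and \<phi>_in_vars: "in_vars c p \<Longrightarrow> in_vars c (\<phi> p)"
    and \<psi>_in_vars: "in_vars c p \<Longrightarrow> in_vars c (\<psi> p)"
    and \<phi>_Rdeg: "p \<in> Rdeg c i \<Longrightarrow> \<phi> p \<in> Rdeg c i"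
    and \<psi>_Rdeg: "p \<in> Rdeg c i \<Longrightarrow> \<psi> p \<in> Rdeg c i"
    and contract_\<phi>: "in_vars c g \<Longrightarrow> contract g F = 0 \<longleftrightarrow> contract (\<phi> g) F\<^sub>0 = 0"
begin

lemma \<psi>_add: "\<psi> (p + q) = \<psi> p + \<psi> q"
  by (metis \<phi>_add \<phi>_\<psi> \<psi>_\<phi>)

lemma \<psi>_mult: "\<psi> (p * q) = \<psi> p * \<psi> q"
  by (metis \<phi>_mult \<phi>_\<psi> \<psi>_\<phi>)

lemma \<phi>_diff: "\<phi> (p - q) = \<phi> p - \<phi> q"
  using \<phi>_add[of "p - q" q] by (simp add: algebra_simps)

lemma \<phi>_power: "\<phi> (p ^ k) = \<phi> p ^ k"
proof -
  have "\<phi> 1 = 1" using \<phi>_mult[of 1 "\<psi> 1"] by (simp add: \<phi>_\<psi>)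
  then show ?thesis by (induction k) (simp_all add: \<phi>_mult)
qed

lemma \<phi>_sum: "\<phi> (\<Sum>j\<in>J. f j) = (\<Sum>j\<in>J. \<phi> (f j))"
  using \<phi>_add by (rule additive.sum[OF additive.intro])

lemma \<psi>_sum: "\<psi> (\<Sum>j\<in>J. f j) = (\<Sum>j\<in>J. \<psi> (f j))"
  using \<psi>_add by (rule additive.sum[OF additive.intro])

lemma Ann_iff: "g \<in> Ann c F \<longleftrightarrow> in_vars c g \<and> \<phi> g \<in> Ann c F\<^sub>0"
  using contract_\<phi> \<phi>_in_vars by (auto simp: Ann_def)

lemma artinian_AF_transfer: "artinian_AF c F\<^sub>0 \<Longrightarrow> artinian_AF c F"
  unfolding artinian_AF_def using \<phi>_Rdeg by (fastforce simp: Ann_iff Rdeg_def)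

lemma codim_AF_transfer:
  assumes "codim_AF c F\<^sub>0"
  shows "codim_AF c F"
  unfolding codim_AF_def
proof (intro ballI impI)
  fix l assume "l \<in> Rdeg c 1" "l \<in> Ann c F"
  then have "\<phi> l = 0" using assms \<phi>_Rdeg by (simp add: codim_AF_def Ann_iff)
  then have "l = \<psi> 0" using \<psi>_\<phi> by metis
  also have "\<psi> 0 = 0" using \<psi>_add[of 0 0] by simp
  finally show "l = 0" .
qed

lemma Ann_eq_gen_ideal_transfer:
  assumes "Ann c F\<^sub>0 = gen_ideal c g" and g: "\<And>j. j < c \<Longrightarrow> in_vars c (g j)"
  shows "Ann c F = gen_ideal c (\<lambda>j. \<psi> (g j))"
proof (intro equalityI subsetI)
  fix x assume "x \<in> Ann c F"
  then obtain h where hx: "\<phi> x = (\<Sum>j<c. h j * g j)" and h: "\<forall>j<c. in_vars c (h j)"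
    using assms by (auto simp: Ann_iff gen_ideal_def)
  have "x = \<psi> (\<phi> x)" by (simp only: \<psi>_\<phi>)
  also have "\<dots> = (\<Sum>j<c. \<psi> (h j) * \<psi> (g j))"
    by (simp only: hx \<psi>_sum \<psi>_mult)
  finally show "x \<in> gen_ideal c (\<lambda>j. \<psi> (g j))"
    using h \<psi>_in_vars by (intro gen_idealI) auto
next
  fix x assume "x \<in> gen_ideal c (\<lambda>j. \<psi> (g j))"
  then obtain h where x: "x = (\<Sum>j<c. h j * \<psi> (g j))" and h: "\<forall>j<c. in_vars c (h j)"
    by (auto simp: gen_ideal_def)
  have "\<phi> x = (\<Sum>j<c. \<phi> (h j) * g j)"
    by (simp add: x \<phi>_sum \<phi>_mult \<phi>_\<psi>)
  then have "\<phi> x \<in> gen_ideal c g"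
    using h \<phi>_in_vars by (intro gen_idealI) auto
  moreover have "in_vars c x"
    unfolding x using h g by (intro in_vars_sum in_vars_mult \<psi>_in_vars) auto
  ultimately show "x \<in> Ann c F"
    using assms(1) by (simp add: Ann_iff)
qed

lemma complete_intersection_AF_transfer:
  assumes "complete_intersection_AF c F\<^sub>0"
  shows "complete_intersection_AF c F"
proof -
  obtain g where "\<forall>j<c. in_vars c (g j)" "Ann c F\<^sub>0 = gen_ideal c g"
    using assms by (auto simp: complete_intersection_AF_iff)
  then show ?thesis
    unfolding complete_intersection_AF_iff
    by (intro exI[of _ "\<lambda>j. \<psi> (g j)"] conjI) (simp_all add: \<psi>_in_vars Ann_eq_gen_ideal_transfer)
qed

lemma mult_pow_inj_transfer:
  assumes "mult_pow_inj c F\<^sub>0 l k i"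
  shows "mult_pow_inj c F (\<psi> l) k i"
  unfolding mult_pow_inj_def
proof (intro ballI impI)
  fix g :: "'a mpoly" assume g: "g \<in> Rdeg c i" and "\<psi> l ^ k * g \<in> Ann c F"
  then have "l ^ k * \<phi> g \<in> Ann c F\<^sub>0"
    by (simp add: Ann_iff \<phi>_mult \<phi>_power \<phi>_\<psi>)
  then have "\<phi> g \<in> Ann c F\<^sub>0"
    using assms \<phi>_Rdeg[OF g] by (simp add: mult_pow_inj_def)
  then show "g \<in> Ann c F" using g by (simp add: Ann_iff Rdeg_def)
qed

lemma mult_pow_surj_transfer:
  assumes "mult_pow_surj c F\<^sub>0 l k i" "l \<in> Rdeg c 1"
  shows "mult_pow_surj c F (\<psi> l) k i"
  unfolding mult_pow_surj_def
proof
  fix h :: "'a mpoly" assume h: "h \<in> Rdeg c (i + k)"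
  then obtain g where g: "g \<in> Rdeg c i" and "\<phi> h - l ^ k * g \<in> Ann c F\<^sub>0"
    using assms(1) \<phi>_Rdeg unfolding mult_pow_surj_def by blast
  then have "\<phi> (h - \<psi> l ^ k * \<psi> g) \<in> Ann c F\<^sub>0"
    by (simp add: \<phi>_diff \<phi>_mult \<phi>_power \<phi>_\<psi>)
  moreover have "in_vars c (h - \<psi> l ^ k * \<psi> g)"
    using h \<psi>_Rdeg[OF assms(2)] \<psi>_Rdeg[OF g]
    by (auto simp: Rdeg_def intro!: in_vars_diff in_vars_mult in_vars_power)
  ultimately show "\<exists>g\<in>Rdeg c i. h - \<psi> l ^ k * g \<in> Ann c F"
    using \<psi>_Rdeg[OF g] by (auto simp: Ann_iff Rdeg_def)
qed

lemma strong_lefschetz_AF_transfer: "strong_lefschetz_AF c F\<^sub>0 \<Longrightarrow> strong_lefschetz_AF c F"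
  unfolding strong_lefschetz_AF_iff
  using \<psi>_Rdeg mult_pow_inj_transfer mult_pow_surj_transfer by metis

end

section \<open>The coordinate change \<open>x\<^sub>0 \<mapsto> x\<^sub>0 + t x\<^sub>1\<close> and its dual\<close>

definition monomial_extend :: "((nat \<Rightarrow>\<^sub>0 nat) \<Rightarrow> 'a::comm_ring_1 mpoly) \<Rightarrow> 'a mpoly \<Rightarrow> 'a mpoly" where
  "monomial_extend M p = (\<Sum>\<gamma>\<in>Poly_Mapping.keys p. C (Poly_Mapping.lookup p \<gamma>) * M \<gamma>)"

lemma monomial_extend_superset:
  assumes "finite S" "Poly_Mapping.keys p \<subseteq> S"
  shows "monomial_extend M p = (\<Sum>\<gamma>\<in>S. C (Poly_Mapping.lookup p \<gamma>) * M \<gamma>)"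
  unfolding monomial_extend_def using assms
  by (intro sum.mono_neutral_left) (auto simp: in_keys_iff)

lemma monomial_extend_add: "monomial_extend M (p + q) = monomial_extend M p + monomial_extend M q"
proof -
  let ?S = "Poly_Mapping.keys p \<union> Poly_Mapping.keys q"
  show ?thesis
    unfolding monomial_extend_superset[OF _ keys_add, simplified] monomial_extend_superset[of ?S p, simplified]
      monomial_extend_superset[of ?S q, simplified]
    by (simp add: lookup_add C_add distrib_right sum.distrib)
qed

lemma monomial_extend_zero [simp]: "monomial_extend M 0 = 0"
  by (simp add: monomial_extend_def)

lemma monomial_extend_sum: "monomial_extend M (\<Sum>i\<in>I. p i) = (\<Sum>i\<in>I. monomial_extend M (p i))"
  by (induction I rule: infinite_finite_induct) (simp_all add: monomial_extend_add)

lemma monomial_extend_single: "monomial_extend M (Poly_Mapping.single \<gamma> a) = C a * M \<gamma>"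
  by (cases "a = 0") (simp_all add: monomial_extend_def)

lemma monomial_extend_mult:
  assumes M: "\<And>\<gamma> \<gamma>'. M (\<gamma> + \<gamma>') = M \<gamma> * M \<gamma>'"
  shows "monomial_extend M (p * q) = monomial_extend M p * monomial_extend M q"
proof -
  have "monomial_extend M (p * q) = (\<Sum>\<gamma>\<in>Poly_Mapping.keys p. \<Sum>\<gamma>'\<in>Poly_Mapping.keys q.
      C (Poly_Mapping.lookup p \<gamma>) * M \<gamma> * (C (Poly_Mapping.lookup q \<gamma>') * M \<gamma>'))"
    by (subst mult_expand) (simp add: monomial_extend_sum monomial_extend_single M mult_ac flip: C_mult_C)
  also have "\<dots> = monomial_extend M p * monomial_extend M q"
    by (simp add: monomial_extend_def sum_product)
  finally show ?thesis .
qed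

definition shear_monomial :: "'a::comm_ring_1 \<Rightarrow> (nat \<Rightarrow>\<^sub>0 nat) \<Rightarrow> 'a mpoly" where
  "shear_monomial t \<gamma> = (X 0 + C t * X 1) ^ Poly_Mapping.lookup \<gamma> 0 *
     Poly_Mapping.single (Poly_Mapping.update 0 0 \<gamma>) 1"

definition shear :: "'a::comm_ring_1 \<Rightarrow> 'a mpoly \<Rightarrow> 'a mpoly" where
  "shear t = monomial_extend (shear_monomial t)"

lemma update_0_add:
  "Poly_Mapping.update 0 0 (\<gamma> + \<gamma>') = Poly_Mapping.update 0 0 \<gamma> + Poly_Mapping.update 0 (0::nat) \<gamma>'"
  by (rule poly_mapping_eqI) (simp add: lookup_update lookup_add)

lemma tdeg_update_0: "tdeg \<gamma> = Poly_Mapping.lookup \<gamma> 0 + tdeg (Poly_Mapping.update 0 0 \<gamma>)"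
proof -
  have "\<gamma> = Poly_Mapping.single 0 (Poly_Mapping.lookup \<gamma> 0) + Poly_Mapping.update 0 0 \<gamma>"
    by (rule poly_mapping_eqI) (simp add: lookup_update lookup_add lookup_single when_def)
  then show ?thesis by (metis tdeg_add tdeg_single)
qed

lemma shear_add: "shear t (p + q) = shear t p + shear t q"
  by (simp add: shear_def monomial_extend_add)

lemma shear_mult: "shear t (p * q) = shear t p * shear t q"
proof -
  have "shear_monomial t (\<gamma> + \<gamma>') = shear_monomial t \<gamma> * shear_monomial t \<gamma>'" for \<gamma> \<gamma>'
  proof -
    have "Poly_Mapping.single (Poly_Mapping.update 0 0 \<gamma> + Poly_Mapping.update 0 0 \<gamma>') (1::'a) =
        Poly_Mapping.single (Poly_Mapping.update 0 0 \<gamma>) 1 * Poly_Mapping.single (Poly_Mapping.update 0 0 \<gamma>') 1"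
      by (simp add: mult_single)
    then show ?thesis by (simp add: shear_monomial_def lookup_add power_add update_0_add mult_ac)
  qed
  then show ?thesis by (simp add: shear_def monomial_extend_mult)
qed

lemma shear_C: "shear t (C a) = C a"
proof -
  have "Poly_Mapping.update 0 0 0 = (0 :: nat \<Rightarrow>\<^sub>0 nat)"
    by (rule poly_mapping_eqI) (simp add: lookup_update)
  then show ?thesis
    unfolding shear_def C_def[of a] monomial_extend_single by (simp add: shear_monomial_def)
qed

lemma shear_X0: "shear t (X 0) = X 0 + C t * X 1"
proof -
  have "Poly_Mapping.update 0 0 (unit_vec 0) = 0"
    by (rule poly_mapping_eqI) (simp add: lookup_update lookup_unit_vec)
  then show ?thesis
    by (simp add: shear_def X_def[of 0] monomial_extend_single shear_monomial_def lookup_unit_vec)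
qed

lemma shear_X: "j \<noteq> 0 \<Longrightarrow> shear t (X j) = X j"
proof -
  assume j: "j \<noteq> 0"
  then have "Poly_Mapping.update 0 0 (unit_vec j) = unit_vec j"
    by (intro poly_mapping_eqI) (simp add: lookup_update lookup_unit_vec)
  with j show ?thesis
    by (simp add: shear_def X_def monomial_extend_single shear_monomial_def lookup_unit_vec)
qed

lemma shear_shear_uminus: "shear (- t) (shear t p) = p"
proof (induction p rule: mpoly_induct)
  case (var i)
  show ?case
  proof (cases "i = 0")
    case True
    have "shear (- t) (X 0 + C t * X 1) = X 0 + C (- t) * X 1 + C t * X 1"
      by (simp add: shear_add shear_mult shear_X0 shear_X shear_C)
    also have "\<dots> = X 0" by (simp add: add.assoc flip: distrib_right C_add)
    finally show ?thesis using True by (simp add: shear_X0)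
  qed (simp add: shear_X)
qed (simp_all add: shear_add shear_mult shear_C)

lemma in_vars_shear:
  assumes "2 \<le> c" "in_vars c p"
  shows "in_vars c (shear t p)"
  unfolding shear_def monomial_extend_def shear_monomial_def
proof (intro in_vars_sum in_vars_mult in_vars_C in_vars_power in_vars_add in_vars_single)
  show "in_vars c (X 0)" "in_vars c (X 1)" using assms(1) by (simp_all add: in_vars_X)
  fix \<gamma> assume "\<gamma> \<in> Poly_Mapping.keys p"
  then have "Poly_Mapping.keys \<gamma> \<subseteq> {..<c}" using assms(2) by (auto simp: in_vars_def)
  moreover have "Poly_Mapping.keys (Poly_Mapping.update 0 0 \<gamma>) \<subseteq> Poly_Mapping.keys \<gamma>"
    by (auto simp: in_keys_iff lookup_update split: if_splits)
  ultimately show "Poly_Mapping.keys (Poly_Mapping.update 0 0 \<gamma>) \<subseteq> {..<c}" by blast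
qed

lemma homog_shear:
  assumes "homog i p"
  shows "homog i (shear t p)"
  unfolding shear_def monomial_extend_def
proof (intro homog_sum homog_C_mult)
  fix \<gamma> assume "\<gamma> \<in> Poly_Mapping.keys p"
  then have "tdeg \<gamma> = i" using assms by (simp add: homog_def)
  moreover have "homog (Poly_Mapping.lookup \<gamma> 0 * 1 + tdeg (Poly_Mapping.update 0 0 \<gamma>)) (shear_monomial t \<gamma>)"
    unfolding shear_monomial_def
    by (intro homog_mult homog_power homog_add homog_C_mult homog_X homog_single)
  ultimately show "homog i (shear_monomial t \<gamma>)" using tdeg_update_0[of \<gamma>] by simp
qed

lemma shear_Rdeg: "2 \<le> c \<Longrightarrow> p \<in> Rdeg c i \<Longrightarrow> shear t p \<in> Rdeg c i"
  by (simp add: Rdeg_def in_vars_shear homog_shear)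

definition shift_exp :: "(nat \<Rightarrow>\<^sub>0 nat) \<Rightarrow> nat \<Rightarrow> (nat \<Rightarrow>\<^sub>0 nat)" where
  "shift_exp \<beta> j = \<beta> - Poly_Mapping.single 0 j + Poly_Mapping.single 1 j"

lemma lookup_shift_exp:
  "Poly_Mapping.lookup (shift_exp \<beta> j) k =
    (if k = 0 then Poly_Mapping.lookup \<beta> 0 - j else if k = 1 then Poly_Mapping.lookup \<beta> 1 + j
     else Poly_Mapping.lookup \<beta> k)"
  by (simp add: shift_exp_def lookup_add lookup_minus lookup_single when_def)

definition unshift_exp :: "(nat \<Rightarrow>\<^sub>0 nat) \<Rightarrow> nat \<Rightarrow> (nat \<Rightarrow>\<^sub>0 nat)" where
  "unshift_exp \<alpha> j = \<alpha> + Poly_Mapping.single 0 j - Poly_Mapping.single 1 j"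

lemma lookup_unshift_exp:
  "Poly_Mapping.lookup (unshift_exp \<alpha> j) k =
    (if k = 0 then Poly_Mapping.lookup \<alpha> 0 + j else if k = 1 then Poly_Mapping.lookup \<alpha> 1 - j
     else Poly_Mapping.lookup \<alpha> k)"
  by (simp add: unshift_exp_def lookup_add lookup_minus lookup_single when_def)

lemma finite_dual_shear_support:
  "finite {\<beta>. (\<Sum>j\<le>Poly_Mapping.lookup \<beta> 0.
      of_nat (Poly_Mapping.lookup \<beta> 0 choose j) * Poly_Mapping.lookup H (shift_exp \<beta> j)) \<noteq> (0::'a::comm_ring_1)}"
    (is "finite ?S")
proof -
  let ?g = "\<lambda>(\<alpha>, j). unshift_exp \<alpha> j"
  have "?S \<subseteq> ?g ` (SIGMA \<alpha>:Poly_Mapping.keys H. {..Poly_Mapping.lookup \<alpha> 1})"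
  proof
    fix \<beta> assume "\<beta> \<in> ?S"
    then obtain j where j: "j \<le> Poly_Mapping.lookup \<beta> 0"
      and "of_nat (Poly_Mapping.lookup \<beta> 0 choose j) * Poly_Mapping.lookup H (shift_exp \<beta> j) \<noteq> (0::'a)"
      by (auto elim: sum.not_neutral_contains_not_neutral)
    then have "shift_exp \<beta> j \<in> Poly_Mapping.keys H" by (auto simp: in_keys_iff)
    moreover have "j \<le> Poly_Mapping.lookup (shift_exp \<beta> j) 1" by (simp add: lookup_shift_exp)
    moreover have "?g (shift_exp \<beta> j, j) = \<beta>"
      by (rule poly_mapping_eqI) (use j in \<open>auto simp: lookup_unshift_exp lookup_shift_exp\<close>)
    ultimately show "\<beta> \<in> ?g ` (SIGMA \<alpha>:Poly_Mapping.keys H. {..Poly_Mapping.lookup \<alpha> 1})"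
      by (metis (no_types, lifting) SigmaI atMost_iff image_eqI)
  qed
  then show ?thesis by (rule finite_subset) auto
qed

text \<open>In divided powers \<open>X\<^sup>[\<^sup>p\<^sup>] X\<^sup>[\<^sup>q\<^sup>] = (p + q choose p) X\<^sup>[\<^sup>p\<^sup>+\<^sup>q\<^sup>]\<close>, so \<open>dual_shear\<close>
  is the substitution \<open>X\<^sub>1 \<mapsto> X\<^sub>0 + X\<^sub>1\<close>; under contraction it is adjoint to \<open>shear 1\<close>.\<close>

definition dual_shear :: "'a::comm_ring_1 mpoly \<Rightarrow> 'a mpoly" where
  "dual_shear H = Abs_poly_mapping (\<lambda>\<beta>. \<Sum>j\<le>Poly_Mapping.lookup \<beta> 0.
     of_nat (Poly_Mapping.lookup \<beta> 0 choose j) * Poly_Mapping.lookup H (shift_exp \<beta> j))"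

lemma lookup_dual_shear:
  "Poly_Mapping.lookup (dual_shear H) \<beta> =
     (\<Sum>j\<le>Poly_Mapping.lookup \<beta> 0. of_nat (Poly_Mapping.lookup \<beta> 0 choose j) * Poly_Mapping.lookup H (shift_exp \<beta> j))"
  unfolding dual_shear_def using finite_dual_shear_support[of H] by simp

lemma dual_shear_add: "dual_shear (H + G) = dual_shear H + dual_shear G"
  by (rule poly_mapping_eqI) (simp add: lookup_dual_shear lookup_add distrib_left sum.distrib)

lemma dual_shear_C_mult: "dual_shear (C a * H) = C a * dual_shear H"
  by (rule poly_mapping_eqI) (simp add: lookup_dual_shear sum_distrib_left mult.left_commute)

lemma dual_shear_eq_0_iff: "dual_shear H = 0 \<longleftrightarrow> H = 0"
proof
  assume "dual_shear H = 0"
  show "H = 0"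
  proof (rule ccontr)
    assume "H \<noteq> 0"
    let ?m = "Min ((\<lambda>\<beta>. Poly_Mapping.lookup \<beta> 0) ` Poly_Mapping.keys H)"
    have "?m \<in> (\<lambda>\<beta>. Poly_Mapping.lookup \<beta> 0) ` Poly_Mapping.keys H"
      using \<open>H \<noteq> 0\<close> by (intro Min_in) auto
    then obtain \<beta> where \<beta>: "\<beta> \<in> Poly_Mapping.keys H" and m: "Poly_Mapping.lookup \<beta> 0 = ?m"
      by auto
    have "Poly_Mapping.lookup H (shift_exp \<beta> j) = 0" if "0 < j" "j \<le> Poly_Mapping.lookup \<beta> 0" for j
    proof -
      have "Poly_Mapping.lookup (shift_exp \<beta> j) 0 < ?m" using that m by (simp add: lookup_shift_exp)
      moreover have "?m \<le> Poly_Mapping.lookup \<beta>' 0" if "\<beta>' \<in> Poly_Mapping.keys H" for \<beta>'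
        using that by (intro Min_le) auto
      ultimately have "shift_exp \<beta> j \<notin> Poly_Mapping.keys H"
        by (meson not_le)
      then show ?thesis by (simp add: in_keys_iff)
    qed
    then have "Poly_Mapping.lookup (dual_shear H) \<beta> = Poly_Mapping.lookup H (shift_exp \<beta> 0)"
      unfolding lookup_dual_shear by (subst sum.mono_neutral_right[of _ "{0}"]) auto
    also have "shift_exp \<beta> 0 = \<beta>" by (rule poly_mapping_eqI) (simp add: lookup_shift_exp)
    finally show False using \<open>dual_shear H = 0\<close> \<beta> by (simp add: in_keys_iff)
  qed
qed (rule poly_mapping_eqI, simp add: lookup_dual_shear)

lemma sum_binomial_Suc:
  fixes T :: "nat \<Rightarrow> 'a::comm_ring_1"
  shows "(\<Sum>j\<le>Suc n. of_nat (Suc n choose j) * T j) =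
     (\<Sum>j\<le>n. of_nat (n choose j) * T j) + (\<Sum>j\<le>n. of_nat (n choose j) * T (Suc j))"
proof -
  have "(\<Sum>j\<le>Suc n. of_nat (Suc n choose j) * T j) =
      T 0 + (\<Sum>j\<le>n. of_nat (n choose j) * T (Suc j)) + (\<Sum>j\<le>n. of_nat (n choose Suc j) * T (Suc j))"
    by (subst sum.atMost_Suc_shift) (simp add: sum.distrib distrib_right)
  moreover have "(\<Sum>j\<le>n. of_nat (n choose j) * T j) = T 0 + (\<Sum>j\<le>n. of_nat (n choose Suc j) * T (Suc j))"
    using sum.atMost_Suc_shift[of "\<lambda>j. of_nat (n choose j) * T j" n] by (simp add: binomial_eq_0)
  ultimately show ?thesis by (simp add: algebra_simps)
qed

lemma contract_X_dual_shear:
  assumes "i \<noteq> 0"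
  shows "contract (X i) (dual_shear H) = dual_shear (contract (X i) H)"
proof (rule poly_mapping_eqI)
  fix \<beta>
  have "Poly_Mapping.lookup (\<beta> + unit_vec i) 0 = Poly_Mapping.lookup \<beta> 0"
    using assms by (simp add: lookup_add_unit_vec)
  moreover have "shift_exp (\<beta> + unit_vec i) j = shift_exp \<beta> j + unit_vec i" for j
    by (rule poly_mapping_eqI) (use assms in \<open>simp add: lookup_shift_exp lookup_add_unit_vec\<close>)
  ultimately show "Poly_Mapping.lookup (contract (X i) (dual_shear H)) \<beta> =
      Poly_Mapping.lookup (dual_shear (contract (X i) H)) \<beta>"
    by (simp add: lookup_contract_X lookup_dual_shear)
qed

lemma contract_X0_dual_shear:
  "contract (X 0) (dual_shear H) = dual_shear (contract (X 0 + X 1) H)"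
proof (rule poly_mapping_eqI)
  fix \<beta> :: "nat \<Rightarrow>\<^sub>0 nat"
  define n where "n = Poly_Mapping.lookup \<beta> 0"
  define T where "T j = Poly_Mapping.lookup H (shift_exp (\<beta> + unit_vec 0) j)" for j
  have shift0: "shift_exp \<beta> j + unit_vec 0 = shift_exp (\<beta> + unit_vec 0) j" if "j \<le> n" for j
    by (rule poly_mapping_eqI) (use that in \<open>auto simp: lookup_shift_exp lookup_add_unit_vec n_def\<close>)
  have shift1: "shift_exp \<beta> j + unit_vec 1 = shift_exp (\<beta> + unit_vec 0) (Suc j)" for j
    by (rule poly_mapping_eqI) (simp add: lookup_shift_exp lookup_add_unit_vec)
  have "Poly_Mapping.lookup (contract (X 0) (dual_shear H)) \<beta> = (\<Sum>j\<le>Suc n. of_nat (Suc n choose j) * T j)"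
    by (simp add: lookup_contract_X lookup_dual_shear lookup_add_unit_vec n_def T_def)
  also have "\<dots> = (\<Sum>j\<le>n. of_nat (n choose j) * (T j + T (Suc j)))"
    unfolding sum_binomial_Suc by (simp add: distrib_left sum.distrib)
  also have "\<dots> = (\<Sum>j\<le>n. of_nat (n choose j) *
      (Poly_Mapping.lookup H (shift_exp \<beta> j + unit_vec 0) + Poly_Mapping.lookup H (shift_exp \<beta> j + unit_vec 1)))"
    by (intro sum.cong refl) (simp add: T_def shift0 shift1[unfolded One_nat_def])
  also have "\<dots> = Poly_Mapping.lookup (dual_shear (contract (X 0 + X 1) H)) \<beta>"
    by (simp add: lookup_dual_shear contract_add_left lookup_add lookup_contract_X n_def)
  finally show "Poly_Mapping.lookup (contract (X 0) (dual_shear H)) \<beta> =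
      Poly_Mapping.lookup (dual_shear (contract (X 0 + X 1) H)) \<beta>" .
qed

lemma contract_dual_shear: "contract g (dual_shear H) = dual_shear (contract (shear 1 g) H)"
proof (induction g arbitrary: H rule: mpoly_induct)
  case (add p q)
  then show ?case by (simp add: contract_add_left shear_add dual_shear_add)
next
  case (mult p q)
  then show ?case by (simp add: contract_mult shear_mult)
next
  case (const a)
  then show ?case by (simp add: shear_C contract_C dual_shear_C_mult)
next
  case (var i)
  then show ?case by (cases "i = 0") (simp_all add: shear_X0 shear_X contract_X0_dual_shear contract_X_dual_shear)
qed

lemma in_keys_dual_shearE:
  assumes "\<beta> \<in> Poly_Mapping.keys (dual_shear H)"
  obtains j where "j \<le> Poly_Mapping.lookup \<beta> 0" "shift_exp \<beta> j \<in> Poly_Mapping.keys H"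
proof -
  obtain j where "j \<in> {..Poly_Mapping.lookup \<beta> 0}"
    "of_nat (Poly_Mapping.lookup \<beta> 0 choose j) * Poly_Mapping.lookup H (shift_exp \<beta> j) \<noteq> 0"
    using assms unfolding in_keys_iff lookup_dual_shear by (rule sum.not_neutral_contains_not_neutral)
  then show ?thesis by (intro that[of j]) (auto simp: in_keys_iff)
qed

lemma homog_dual_shear:
  assumes "homog d H"
  shows "homog d (dual_shear H)"
  unfolding homog_def
proof
  fix \<beta> assume "\<beta> \<in> Poly_Mapping.keys (dual_shear H)"
  then obtain j where j: "j \<le> Poly_Mapping.lookup \<beta> 0" and "shift_exp \<beta> j \<in> Poly_Mapping.keys H"
    by (rule in_keys_dual_shearE)
  then have "tdeg (shift_exp \<beta> j) = d" using assms by (simp add: homog_def)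
  moreover have "shift_exp \<beta> j + Poly_Mapping.single 0 j = \<beta> + Poly_Mapping.single 1 j"
    by (rule poly_mapping_eqI) (use j in \<open>simp add: lookup_shift_exp lookup_add lookup_single when_def\<close>)
  then have "tdeg (shift_exp \<beta> j) + j = tdeg \<beta> + j"
    by (metis tdeg_add tdeg_single)
  ultimately show "tdeg \<beta> = d" by simp
qed

lemma in_vars_dual_shear:
  assumes "2 \<le> c" "in_vars c H"
  shows "in_vars c (dual_shear H)"
  unfolding in_vars_def
proof (intro ballI subsetI)
  fix \<beta> k assume \<beta>: "\<beta> \<in> Poly_Mapping.keys (dual_shear H)" and k: "k \<in> Poly_Mapping.keys \<beta>"
  obtain j where j: "shift_exp \<beta> j \<in> Poly_Mapping.keys H"
    using \<beta> by (rule in_keys_dual_shearE)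
  show "k \<in> {..<c}"
  proof (cases "k \<le> 1")
    case False
    then have "k \<in> Poly_Mapping.keys (shift_exp \<beta> j)" using k by (simp add: in_keys_iff lookup_shift_exp)
    then show ?thesis using assms(2) j by (auto simp: in_vars_def)
  qed (use assms(1) in auto)
qed

lemma Ann_transfer_dual_shear:
  assumes "2 \<le> c"
  shows "Ann_transfer c (shear 1) (shear (-1)) (dual_shear F\<^sub>0) (F\<^sub>0 :: 'a::comm_ring_1 mpoly)"
proof
  show "shear (-1) (shear 1 p) = p" "shear 1 (shear (-1) p) = p" for p :: "'a mpoly"
    using shear_shear_uminus[of 1 p] shear_shear_uminus[of "-1" p] by simp_all
  show "contract g (dual_shear F\<^sub>0) = 0 \<longleftrightarrow> contract (shear 1 g) F\<^sub>0 = 0" for g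
    by (simp add: contract_dual_shear dual_shear_eq_0_iff)
qed (use assms in \<open>simp_all add: shear_add shear_mult in_vars_shear shear_Rdeg\<close>)

lemma shift_exp_eq_iff:
  assumes "j' \<le> Poly_Mapping.lookup \<beta> 0"
  shows "shift_exp \<beta> j' = \<alpha> \<longleftrightarrow> j' \<le> Poly_Mapping.lookup \<alpha> 1 \<and> \<beta> = unshift_exp \<alpha> j'"
proof
  assume "shift_exp \<beta> j' = \<alpha>"
  then have "Poly_Mapping.lookup \<alpha> k = Poly_Mapping.lookup (shift_exp \<beta> j') k" for k by simp
  then show "j' \<le> Poly_Mapping.lookup \<alpha> 1 \<and> \<beta> = unshift_exp \<alpha> j'"
    using assms by (auto simp: lookup_shift_exp lookup_unshift_exp intro!: poly_mapping_eqI)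
next
  assume "j' \<le> Poly_Mapping.lookup \<alpha> 1 \<and> \<beta> = unshift_exp \<alpha> j'"
  then show "shift_exp \<beta> j' = \<alpha>"
    by (auto simp: lookup_shift_exp lookup_unshift_exp intro!: poly_mapping_eqI)
qed

lemma keys_dual_shear_monomial:
  "Poly_Mapping.keys (dual_shear (Poly_Mapping.single \<alpha> (1::'a::{comm_ring_1, ring_char_0}))) =
     unshift_exp \<alpha> ` {..Poly_Mapping.lookup \<alpha> 1}"
proof (intro equalityI subsetI)
  fix \<beta> assume "\<beta> \<in> Poly_Mapping.keys (dual_shear (Poly_Mapping.single \<alpha> (1::'a)))"
  then obtain j where "j \<le> Poly_Mapping.lookup \<beta> 0" "shift_exp \<beta> j = \<alpha>"
    by (auto elim: in_keys_dual_shearE)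
  then show "\<beta> \<in> unshift_exp \<alpha> ` {..Poly_Mapping.lookup \<alpha> 1}"
    by (auto simp: shift_exp_eq_iff)
next
  fix \<beta> assume "\<beta> \<in> unshift_exp \<alpha> ` {..Poly_Mapping.lookup \<alpha> 1}"
  then obtain j where j: "j \<le> Poly_Mapping.lookup \<alpha> 1" and \<beta>: "\<beta> = unshift_exp \<alpha> j" by auto
  have "\<alpha> = shift_exp \<beta> j' \<longleftrightarrow> j' = j" if "j' \<le> Poly_Mapping.lookup \<beta> 0" for j'
  proof
    assume "\<alpha> = shift_exp \<beta> j'"
    then have "unshift_exp \<alpha> j = unshift_exp \<alpha> j'" using shift_exp_eq_iff[OF that, of \<alpha>] \<beta> by auto
    then show "j' = j" by (metis add_left_cancel lookup_unshift_exp)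
  qed (use shift_exp_eq_iff[OF that, of \<alpha>] j \<beta> in auto)
  then have "Poly_Mapping.lookup (dual_shear (Poly_Mapping.single \<alpha> (1::'a))) \<beta>
      = (\<Sum>j'\<le>Poly_Mapping.lookup \<beta> 0. if j' = j then of_nat (Poly_Mapping.lookup \<beta> 0 choose j) else 0)"
    unfolding lookup_dual_shear by (intro sum.cong refl) (auto simp: lookup_single when_def)
  also have "\<dots> = of_nat (Poly_Mapping.lookup \<beta> 0 choose j)"
    using \<beta> by (simp add: lookup_unshift_exp)
  finally show "\<beta> \<in> Poly_Mapping.keys (dual_shear (Poly_Mapping.single \<alpha> (1::'a)))"
    using \<beta> by (simp add: in_keys_iff lookup_unshift_exp)
qed

lemma card_keys_dual_shear_monomial:
  "card (Poly_Mapping.keys (dual_shear (Poly_Mapping.single \<alpha> (1::'a::{comm_ring_1, ring_char_0})))) =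
     Poly_Mapping.lookup \<alpha> 1 + 1"
proof -
  have "inj_on (unshift_exp \<alpha>) {..Poly_Mapping.lookup \<alpha> 1}"
    by (rule inj_onI) (drule arg_cong[of _ _ "\<lambda>\<gamma>. Poly_Mapping.lookup \<gamma> 0"], simp add: lookup_unshift_exp)
  then show ?thesis by (simp add: keys_dual_shear_monomial card_image)
qed

definition SLP_complete_intersection :: "nat \<Rightarrow> 'a::comm_ring_1 mpoly \<Rightarrow> bool" where
  "SLP_complete_intersection c F \<longleftrightarrow>
     artinian_AF c F \<and> codim_AF c F \<and> complete_intersection_AF c F \<and> strong_lefschetz_AF c F"

lemma SLP_complete_intersection_monomial:
  assumes "Poly_Mapping.keys \<alpha> \<subseteq> {..<c}" "\<And>i. i < c \<Longrightarrow> 1 \<le> Poly_Mapping.lookup \<alpha> i"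
  shows "SLP_complete_intersection c (Poly_Mapping.single \<alpha> (1::'a::field_char_0))"
  unfolding SLP_complete_intersection_def
  using artinian_monomial codim_monomial[OF assms(2)] complete_intersection_monomial
    strong_lefschetz_monomial[OF assms(1)] by blast

lemma SLP_complete_intersection_dual_shear:
  assumes "2 \<le> c" "SLP_complete_intersection c F\<^sub>0"
  shows "SLP_complete_intersection c (dual_shear F\<^sub>0)"
proof -
  interpret Ann_transfer c "shear 1" "shear (-1)" "dual_shear F\<^sub>0" F\<^sub>0
    by (rule Ann_transfer_dual_shear[OF assms(1)])
  show ?thesis
    using assms(2) artinian_AF_transfer codim_AF_transfer complete_intersection_AF_transfer
      strong_lefschetz_AF_transfer
    by (simp add: SLP_complete_intersection_def)
qed

definition example_exp :: "nat \<Rightarrow> nat \<Rightarrow> (nat \<Rightarrow>\<^sub>0 nat)" where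
  "example_exp c s = Abs_poly_mapping (\<lambda>i. if i = 1 then s - 1 else if i < c then 1 else 0)"

lemma lookup_example_exp:
  "Poly_Mapping.lookup (example_exp c s) i = (if i = 1 then s - 1 else if i < c then 1 else 0)"
proof -
  have "finite {i. (if i = 1 then s - 1 else if i < c then 1 else 0) \<noteq> (0::nat)}"
    by (rule finite_subset[of _ "{..Suc c}"]) auto
  then show ?thesis by (simp add: example_exp_def)
qed

lemma keys_example_exp: "2 \<le> c \<Longrightarrow> Poly_Mapping.keys (example_exp c s) \<subseteq> {..<c}"
  by (auto simp: in_keys_iff lookup_example_exp split: if_splits)

lemma SLP_complete_intersection_example:
  assumes "2 \<le> c" "2 \<le> s"
  shows "SLP_complete_intersection c (Poly_Mapping.single (example_exp c s) (1::'a::field_char_0))"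
  using assms by (intro SLP_complete_intersection_monomial keys_example_exp) (auto simp: lookup_example_exp)

theorem proposition5p1:
  fixes s c :: nat
  assumes "s \<ge> 1" and "c \<ge> 2"
  shows "\<exists>F :: 'a::{alg_closed_field, field_char_0} mpoly.
           in_vars c F \<and> (\<exists>d. homog d F) \<and> card (Poly_Mapping.keys F) = s \<and>
           artinian_AF c F \<and> codim_AF c F \<and> complete_intersection_AF c F \<and>
           strong_lefschetz_AF c F"
proof (cases "s = 1")
  case True
  let ?F = "Poly_Mapping.single (example_exp c 2) (1::'a)"
  have "in_vars c ?F" "homog (tdeg (example_exp c 2)) ?F" "card (Poly_Mapping.keys ?F) = s"
    using True keys_example_exp[OF assms(2)] by (simp_all add: in_vars_single homog_single)
  then show ?thesis
    using SLP_complete_intersection_example[OF assms(2), of 2]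
    unfolding SLP_complete_intersection_def by blast
next
  case False
  then have s: "2 \<le> s" using assms(1) by simp
  let ?F\<^sub>0 = "Poly_Mapping.single (example_exp c s) (1::'a)"
  have "in_vars c (dual_shear ?F\<^sub>0)"
    using assms(2) keys_example_exp[OF assms(2)] by (simp add: in_vars_dual_shear in_vars_single)
  moreover have "homog (tdeg (example_exp c s)) (dual_shear ?F\<^sub>0)"
    by (rule homog_dual_shear[OF homog_single])
  moreover have "card (Poly_Mapping.keys (dual_shear ?F\<^sub>0)) = s"
    using s by (simp add: card_keys_dual_shear_monomial lookup_example_exp)
  moreover have "SLP_complete_intersection c (dual_shear ?F\<^sub>0)"
    by (intro SLP_complete_intersection_dual_shear SLP_complete_intersection_example assms(2) s)
  ultimately show ?thesis
    unfolding SLP_complete_intersection_def by blast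
qed

end
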